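(* Let $K\subseteq\mathbb A^n_{\mathtt F_1}$ be a closed subset and $q$ a maximal element of $K$. Then $[\mathcal Ext^i(k_K,\omega)]_q\cong k$ for $i=d_q$ and $[\mathcal Ext^i(k_K,\omega)]_q=0$ for $i\neq d_q$, where $d_q=\dim U_q$.
   Context: $k$ is a noetherian ring. $\mathbb A^n_{\mathtt F_1}$ is the set of subsets of $\{1,\dots,n\}$ ordered by inclusion with the topology of up-closed sets; $\mathbf 1=\{1,\dots,n\}$; $U_q=\{r\supseteq q\}$, $d_q=\dim U_q=n-|q|$. $k_K$ is the constant sheaf $k$ supported on $K$; $\omega=k_{\{\mathbf 1\}}$; $\mathcal Ext$ is computed in sheaves of $k$-modules on $\mathbb A^n_{\mathtt F_1}$. *)

theory Defs
  imports Main "HOL-Library.Function_Algebras"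
begin

definition is_ideal :: "'k::comm_ring_1 set \<Rightarrow> bool" where
  "is_ideal I \<longleftrightarrow> 0 \<in> I \<and> (\<forall>x\<in>I. \<forall>y\<in>I. x + y \<in> I) \<and> (\<forall>a. \<forall>x\<in>I. a * x \<in> I)"

definition noetherian_ring :: "'k::comm_ring_1 itself \<Rightarrow> bool" where
  "noetherian_ring _ \<longleftrightarrow>
     (\<forall>I :: 'k set. is_ideal I \<longrightarrow>
        (\<exists>S. finite S \<and> I = {\<Sum>s\<in>S. c s * s | c. True}))"

section \<open>The space A^n_F1 (subsets of {1..n}, opens = up-closed sets)\<close>

definition AF1 :: "nat \<Rightarrow> nat set set" where
  "AF1 n = Pow {1..n}"

definition open_AF1 :: "nat \<Rightarrow> nat set set \<Rightarrow> bool" where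
  "open_AF1 n U \<longleftrightarrow> U \<subseteq> AF1 n \<and> (\<forall>p\<in>U. \<forall>r\<in>AF1 n. p \<subseteq> r \<longrightarrow> r \<in> U)"

definition closed_AF1 :: "nat \<Rightarrow> nat set set \<Rightarrow> bool" where
  "closed_AF1 n K \<longleftrightarrow> K \<subseteq> AF1 n \<and> open_AF1 n (AF1 n - K)"

definition Uq :: "nat \<Rightarrow> nat set \<Rightarrow> nat set set" where
  "Uq n q = {r \<in> AF1 n. q \<subseteq> r}"

definition dq :: "nat \<Rightarrow> nat set \<Rightarrow> nat" where
  "dq n q = n - card q"

section \<open>k-modules (inside the ambient k-module nat => k)\<close>

type_synonym 'k vec = "nat \<Rightarrow> 'k"

definition smul :: "'k::comm_ring_1 \<Rightarrow> 'k vec \<Rightarrow> 'k vec" where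
  "smul c x = (\<lambda>j. c * x j)"

definition submod :: "'k::comm_ring_1 vec set \<Rightarrow> bool" where
  "submod M \<longleftrightarrow> 0 \<in> M \<and> (\<forall>x\<in>M. \<forall>y\<in>M. x + y \<in> M) \<and> (\<forall>c. \<forall>x\<in>M. smul c x \<in> M)"

definition linmap :: "'k::comm_ring_1 vec set \<Rightarrow> 'k vec set \<Rightarrow> ('k vec \<Rightarrow> 'k vec) \<Rightarrow> bool" where
  "linmap M N f \<longleftrightarrow> (\<forall>x\<in>M. f x \<in> N) \<and> (\<forall>x\<in>M. \<forall>y\<in>M. f (x + y) = f x + f y)
      \<and> (\<forall>c. \<forall>x\<in>M. f (smul c x) = smul c (f x))"

text \<open>The free k-module of rank one, k = k * e_0.\<close>
definition kline :: "'k::comm_ring_1 vec set" where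
  "kline = {x. \<forall>j. j \<noteq> 0 \<longrightarrow> x j = 0}"

text \<open>On the finite (Alexandrov) space, a sheaf F on an open set Q is the same as
  its stalks F_r = F(U_r) (r in Q) together with the restriction maps
  F(U_q) -> F(U_r) for q \<subseteq> r (i.e. U_r \<subseteq> U_q), satisfying functoriality.\<close>

definition is_sheaf :: "nat set set \<Rightarrow> (nat set \<Rightarrow> 'k::comm_ring_1 vec set)
    \<Rightarrow> (nat set \<Rightarrow> nat set \<Rightarrow> 'k vec \<Rightarrow> 'k vec) \<Rightarrow> bool" where
  "is_sheaf Q M \<rho> \<longleftrightarrow>
     (\<forall>q\<in>Q. submod (M q)) \<and>
     (\<forall>q\<in>Q. \<forall>r\<in>Q. q \<subseteq> r \<longrightarrow> linmap (M q) (M r) (\<rho> q r)) \<and>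
     (\<forall>q\<in>Q. \<forall>x\<in>M q. \<rho> q q x = x) \<and>
     (\<forall>p\<in>Q. \<forall>q\<in>Q. \<forall>r\<in>Q. p \<subseteq> q \<longrightarrow> q \<subseteq> r \<longrightarrow> (\<forall>x\<in>M p. \<rho> q r (\<rho> p q x) = \<rho> p r x))"

text \<open>Morphisms of sheaves (families of stalk maps commuting with restrictions);
  normalised to be 0 outside their domain so that Hom-sets are honest sets.\<close>
definition sheaf_hom :: "nat set set \<Rightarrow> (nat set \<Rightarrow> 'k::comm_ring_1 vec set)
    \<Rightarrow> (nat set \<Rightarrow> nat set \<Rightarrow> 'k vec \<Rightarrow> 'k vec)
    \<Rightarrow> (nat set \<Rightarrow> 'k vec set) \<Rightarrow> (nat set \<Rightarrow> nat set \<Rightarrow> 'k vec \<Rightarrow> 'k vec)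
    \<Rightarrow> (nat set \<Rightarrow> 'k vec \<Rightarrow> 'k vec) \<Rightarrow> bool" where
  "sheaf_hom Q M \<rho> N \<sigma> \<phi> \<longleftrightarrow>
     (\<forall>q\<in>Q. linmap (M q) (N q) (\<phi> q)) \<and>
     (\<forall>q\<in>Q. \<forall>r\<in>Q. q \<subseteq> r \<longrightarrow> (\<forall>x\<in>M q. \<phi> r (\<rho> q r x) = \<sigma> q r (\<phi> q x))) \<and>
     (\<forall>q x. q \<notin> Q \<or> x \<notin> M q \<longrightarrow> \<phi> q x = 0)"

definition fin_gen :: "nat set set \<Rightarrow> (nat set \<Rightarrow> 'k::comm_ring_1 vec set)
    \<Rightarrow> (nat set \<Rightarrow> nat set \<Rightarrow> 'k vec \<Rightarrow> 'k vec) \<Rightarrow> bool" where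
  "fin_gen Q M \<rho> \<longleftrightarrow>
     (\<exists>S. finite S \<and> S \<subseteq> Sigma Q M \<and>
        (\<forall>r\<in>Q. \<forall>x\<in>M r. \<exists>c. x = (\<Sum>(p,s)\<in>{(p,s)\<in>S. p \<subseteq> r}. smul (c (p,s)) (\<rho> p r s))))"

definition projective :: "nat set set \<Rightarrow> (nat set \<Rightarrow> 'k::comm_ring_1 vec set)
    \<Rightarrow> (nat set \<Rightarrow> nat set \<Rightarrow> 'k vec \<Rightarrow> 'k vec) \<Rightarrow> bool" where
  "projective Q P \<rho> \<longleftrightarrow>
     (\<forall>B \<rho>B C \<rho>C g f. is_sheaf Q B \<rho>B \<longrightarrow> is_sheaf Q C \<rho>C \<longrightarrow>
        sheaf_hom Q B \<rho>B C \<rho>C g \<longrightarrow> (\<forall>q\<in>Q. g q ` B q = C q) \<longrightarrow>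
        sheaf_hom Q P \<rho> C \<rho>C f \<longrightarrow>
        (\<exists>h. sheaf_hom Q P \<rho> B \<rho>B h \<and> (\<forall>q\<in>Q. \<forall>x\<in>P q. g q (h q x) = f q x)))"

definition proj_resolution :: "nat set set
    \<Rightarrow> (nat set \<Rightarrow> 'k::comm_ring_1 vec set) \<Rightarrow> (nat set \<Rightarrow> nat set \<Rightarrow> 'k vec \<Rightarrow> 'k vec)
    \<Rightarrow> (nat \<Rightarrow> nat set \<Rightarrow> 'k vec set) \<Rightarrow> (nat \<Rightarrow> nat set \<Rightarrow> nat set \<Rightarrow> 'k vec \<Rightarrow> 'k vec)
    \<Rightarrow> (nat \<Rightarrow> nat set \<Rightarrow> 'k vec \<Rightarrow> 'k vec) \<Rightarrow> (nat set \<Rightarrow> 'k vec \<Rightarrow> 'k vec) \<Rightarrow> bool" where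
  "proj_resolution Q F \<rho>F P \<rho> d \<epsilon> \<longleftrightarrow>
     (\<forall>j. is_sheaf Q (P j) (\<rho> j) \<and> fin_gen Q (P j) (\<rho> j) \<and> projective Q (P j) (\<rho> j)) \<and>
     (\<forall>j. sheaf_hom Q (P (Suc j)) (\<rho> (Suc j)) (P j) (\<rho> j) (d j)) \<and>
     sheaf_hom Q (P 0) (\<rho> 0) F \<rho>F \<epsilon> \<and>
     (\<forall>r\<in>Q. \<epsilon> r ` P 0 r = F r) \<and>
     (\<forall>r\<in>Q. {x\<in>P 0 r. \<epsilon> r x = 0} = d 0 r ` P 1 r) \<and>
     (\<forall>j. \<forall>r\<in>Q. {x\<in>P (Suc j) r. d j r x = 0} = d (Suc j) r ` P (Suc (Suc j)) r)"

section \<open>Ext via a projective resolution of the first argument\<close>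

type_synonym 'k shom = "nat set \<Rightarrow> 'k vec \<Rightarrow> 'k vec"

definition hsmul :: "'k::comm_ring_1 \<Rightarrow> 'k shom \<Rightarrow> 'k shom" where
  "hsmul c \<phi> = (\<lambda>r x. smul c (\<phi> r x))"

definition cobd :: "nat set set \<Rightarrow> (nat \<Rightarrow> nat set \<Rightarrow> 'k::comm_ring_1 vec set)
    \<Rightarrow> (nat \<Rightarrow> nat set \<Rightarrow> 'k vec \<Rightarrow> 'k vec) \<Rightarrow> nat \<Rightarrow> 'k shom \<Rightarrow> 'k shom" where
  "cobd Q P d j \<phi> = (\<lambda>r x. if r \<in> Q \<and> x \<in> P (Suc j) r then \<phi> r (d j r x) else 0)"

definition cocycles where
  "cocycles Q P \<rho> d G \<rho>G i =
     {\<phi>. sheaf_hom Q (P i) (\<rho> i) G \<rho>G \<phi> \<and> cobd Q P d i \<phi> = 0}"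

definition coboundaries where
  "coboundaries Q P \<rho> d G \<rho>G i =
     (if i = 0 then {0}
      else cobd Q P d (i - 1) ` {\<phi>. sheaf_hom Q (P (i - 1)) (\<rho> (i - 1)) G \<rho>G \<phi>})"

text \<open>H^i(Hom(P_\<bullet>, G)) is isomorphic to k: a k-linear surjection from the
  cocycles onto k whose kernel is the coboundaries.\<close>
definition Ext_iso_k where
  "Ext_iso_k Q P \<rho> d G \<rho>G i \<longleftrightarrow>
     (\<exists>f :: 'k shom \<Rightarrow> 'k::comm_ring_1.
        (\<forall>\<phi>\<in>cocycles Q P \<rho> d G \<rho>G i. \<forall>\<psi>\<in>cocycles Q P \<rho> d G \<rho>G i. f (\<phi> + \<psi>) = f \<phi> + f \<psi>) \<and>
        (\<forall>c. \<forall>\<phi>\<in>cocycles Q P \<rho> d G \<rho>G i. f (hsmul c \<phi>) = c * f \<phi>) \<and>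
        f ` cocycles Q P \<rho> d G \<rho>G i = UNIV \<and>
        {\<phi>\<in>cocycles Q P \<rho> d G \<rho>G i. f \<phi> = 0} = coboundaries Q P \<rho> d G \<rho>G i)"

definition Ext_zero where
  "Ext_zero Q P \<rho> d G \<rho>G i \<longleftrightarrow> cocycles Q P \<rho> d G \<rho>G i = coboundaries Q P \<rho> d G \<rho>G i"

definition kK_stalk :: "nat set set \<Rightarrow> nat set \<Rightarrow> 'k::comm_ring_1 vec set" where
  "kK_stalk K r = (if r \<in> K then kline else {0})"

definition kK_res :: "nat set set \<Rightarrow> nat set \<Rightarrow> nat set \<Rightarrow> 'k::comm_ring_1 vec \<Rightarrow> 'k vec" where
  "kK_res K p r x = (if r \<in> K then x else 0)"

definition omega_stalk :: "nat \<Rightarrow> nat set \<Rightarrow> 'k::comm_ring_1 vec set" where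
  "omega_stalk n r = kK_stalk {{1..n}} r"

definition omega_res :: "nat \<Rightarrow> nat set \<Rightarrow> nat set \<Rightarrow> 'k::comm_ring_1 vec \<Rightarrow> 'k vec" where
  "omega_res n = kK_res {{1..n}}"

end

theory Submission
  imports Defs "HOL-Library.Nat_Bijection"
begin

text \<open>Since \<open>q\<close> is maximal in the closed set \<open>K\<close>, the open set \<open>U\<^sub>q\<close> meets \<open>K\<close> only in its
  minimum \<open>q\<close>, so on \<open>U\<^sub>q\<close> the sheaf \<open>k\<^sub>K\<close> is the skyscraper at \<open>q\<close>. It has the Koszul
  resolution whose \<open>j\<close>-th term has at \<open>r\<close> the free module on the \<open>j\<close>-subsets of \<open>r - q\<close>; its terms
  are projective, because a section over \<open>U\<^bsub>q \<union> S\<^esub>\<close> may be prescribed freely for each generator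
  \<open>S\<close>. A homomorphism from the \<open>j\<close>-th Koszul term to \<open>\<omega>\<close> is determined by its values on the
  generators, which all vanish except in degree \<open>j = n - |q|\<close>, where the single generator
  \<open>{1..n} - q\<close> lives at the top point. Hence \<open>Hom(Koszul, \<omega>)\<close> is \<open>k\<close> concentrated in degree
  \<open>d\<^sub>q\<close>. Any other projective resolution is chain homotopy equivalent to the Koszul one, and the
  comparison maps transport this computation of the cohomology.\<close>

section \<open>Modules and sheaves on \<open>U\<^sub>q\<close>\<close>

lemma smul_apply [simp]: "smul c x j = c * x j"
  by (simp add: smul_def)

lemma smul_minus_one: "smul (-1) x = - x"
  by (rule ext) simp

lemma smul_zero_left: "smul 0 w = 0"
  by (rule ext) simp

lemma smul_one_left: "smul 1 w = w"
  by (rule ext) simp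

lemma smul_add_left: "smul (a + b) w = smul a w + smul b w"
  by (rule ext) (simp add: distrib_right)

lemma smul_mult: "smul (c * a) w = smul c (smul a w)"
  by (rule ext) (simp add: mult.assoc)

lemma sum_apply: "(\<Sum>i\<in>I. v i) N = (\<Sum>i\<in>I. v i N)"
  by (induction I rule: infinite_finite_induct) auto

lemma smul_sum: "smul c (\<Sum>i\<in>I. v i) = (\<Sum>i\<in>I. smul c (v i))"
  by (rule ext) (simp add: sum_apply sum_distrib_left)

lemma submod_zero: "submod M \<Longrightarrow> 0 \<in> M"
  unfolding submod_def by auto

lemma submod_add: "submod M \<Longrightarrow> x \<in> M \<Longrightarrow> y \<in> M \<Longrightarrow> x + y \<in> M"
  unfolding submod_def by auto

lemma submod_smul: "submod M \<Longrightarrow> x \<in> M \<Longrightarrow> smul c x \<in> M"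
  unfolding submod_def by auto

lemma submod_uminus: "submod M \<Longrightarrow> x \<in> M \<Longrightarrow> - x \<in> M"
  using submod_smul[of M x "-1"] by (simp add: smul_minus_one)

lemma submod_diff: "submod M \<Longrightarrow> x \<in> M \<Longrightarrow> y \<in> M \<Longrightarrow> x - y \<in> M"
  using submod_add[of M x "-y"] submod_uminus[of M y] by simp

lemma submod_sum:
  assumes "submod M" "finite I" "\<forall>i\<in>I. v i \<in> M" shows "(\<Sum>i\<in>I. v i) \<in> M"
  using assms(2,3) by (induction I rule: finite_induct) (auto simp: submod_zero[OF assms(1)] submod_add[OF assms(1)])

lemma kline_submod: "submod (kline :: 'k::comm_ring_1 vec set)"
  unfolding submod_def kline_def by simp

lemma zero_submod: "submod ({0} :: 'k::comm_ring_1 vec set)"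
  unfolding submod_def by (simp add: fun_eq_iff)

lemma kline_eq_zero:
  assumes "x \<in> kline" and "x 0 = 0"
  shows "x = 0"
proof
  fix N show "x N = 0 N" using assms by (cases "N = 0") (auto simp: kline_def)
qed

lemma linmap_in: "linmap M N f \<Longrightarrow> x \<in> M \<Longrightarrow> f x \<in> N"
  unfolding linmap_def by auto

lemma linmap_add: "linmap M N f \<Longrightarrow> x \<in> M \<Longrightarrow> y \<in> M \<Longrightarrow> f (x + y) = f x + f y"
  unfolding linmap_def by auto

lemma linmap_smul: "linmap M N f \<Longrightarrow> x \<in> M \<Longrightarrow> f (smul c x) = smul c (f x)"
  unfolding linmap_def by auto

lemma linmap_zero:
  assumes "submod M" "linmap M N f"
  shows "f 0 = 0"
proof -
  have "f (0 + 0) = f 0 + f 0" using linmap_add[OF assms(2) submod_zero[OF assms(1)] submod_zero[OF assms(1)]] .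
  then show ?thesis by (metis add.right_neutral add_cancel_right_right)
qed

lemma linmap_uminus: "linmap M N f \<Longrightarrow> x \<in> M \<Longrightarrow> f (- x) = - f x"
  using linmap_smul[of M N f x "-1"] by (simp add: smul_minus_one)

lemma linmap_diff: "submod M \<Longrightarrow> linmap M N f \<Longrightarrow> x \<in> M \<Longrightarrow> y \<in> M \<Longrightarrow> f (x - y) = f x - f y"
  using linmap_add[of M N f x "-y"] linmap_uminus[of M N f y] submod_uminus[of M y] by simp

lemma linmap_sum:
  assumes "submod M" "linmap M N f" "finite I" "\<forall>i\<in>I. v i \<in> M"
  shows "f (\<Sum>i\<in>I. v i) = (\<Sum>i\<in>I. f (v i))"
  using assms(3,4)
proof (induction I rule: finite_induct)
  case empty then show ?case using linmap_zero[OF assms(1,2)] by (simp only: sum.empty)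
next
  case (insert a I)
  have "f (\<Sum>i\<in>insert a I. v i) = f (v a + (\<Sum>i\<in>I. v i))" by (subst sum.insert[OF insert(1,2)]) (rule refl)
  also have "\<dots> = f (v a) + f (\<Sum>i\<in>I. v i)"
    using linmap_add[OF assms(2)] submod_sum[OF assms(1) insert(1)] insert(4) by blast
  also have "\<dots> = (\<Sum>i\<in>insert a I. f (v i))" using insert(1-4) by simp
  finally show ?case .
qed

lemma linmap_mono: "linmap M N f \<Longrightarrow> M' \<subseteq> M \<Longrightarrow> (\<forall>x\<in>M'. f x \<in> N') \<Longrightarrow> linmap M' N' f"
  unfolding linmap_def by blast

lemma mem_Uq_iff: "r \<in> Uq n q \<longleftrightarrow> r \<subseteq> {1..n} \<and> q \<subseteq> r"
  by (auto simp: Uq_def AF1_def)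

lemma is_sheafD:
  assumes "is_sheaf Q M \<rho>"
  shows "q \<in> Q \<Longrightarrow> submod (M q)"
    "q \<in> Q \<Longrightarrow> r \<in> Q \<Longrightarrow> q \<subseteq> r \<Longrightarrow> linmap (M q) (M r) (\<rho> q r)"
    "q \<in> Q \<Longrightarrow> x \<in> M q \<Longrightarrow> \<rho> q q x = x"
    "p \<in> Q \<Longrightarrow> q \<in> Q \<Longrightarrow> r \<in> Q \<Longrightarrow> p \<subseteq> q \<Longrightarrow> q \<subseteq> r \<Longrightarrow> x \<in> M p \<Longrightarrow> \<rho> q r (\<rho> p q x) = \<rho> p r x"
  using assms unfolding is_sheaf_def by simp_all

lemma sheaf_homD:
  assumes "sheaf_hom Q M \<rho> N \<sigma> \<phi>"
  shows "q \<in> Q \<Longrightarrow> linmap (M q) (N q) (\<phi> q)"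
    "q \<in> Q \<Longrightarrow> r \<in> Q \<Longrightarrow> q \<subseteq> r \<Longrightarrow> x \<in> M q \<Longrightarrow> \<phi> r (\<rho> q r x) = \<sigma> q r (\<phi> q x)"
    "q \<notin> Q \<Longrightarrow> \<phi> q x = 0"
    "x \<notin> M q \<Longrightarrow> \<phi> q x = 0"
  using assms unfolding sheaf_hom_def by auto

lemma sheaf_hom_in: "sheaf_hom Q M \<rho> N \<sigma> \<phi> \<Longrightarrow> q \<in> Q \<Longrightarrow> x \<in> M q \<Longrightarrow> \<phi> q x \<in> N q"
  using sheaf_homD(1) linmap_in by metis

lemma sheaf_hom_map_zero: "sheaf_hom Q M \<rho> N \<sigma> \<phi> \<Longrightarrow> is_sheaf Q M \<rho> \<Longrightarrow> \<phi> r 0 = 0"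
  by (metis is_sheafD(1) linmap_zero sheaf_homD(1) sheaf_homD(3))

lemma sheaf_hom_codomain_mono:
  "sheaf_hom Q M \<rho> N \<sigma> \<phi> \<Longrightarrow> (\<forall>q\<in>Q. \<forall>x\<in>M q. \<phi> q x \<in> N' q) \<Longrightarrow> sheaf_hom Q M \<rho> N' \<sigma> \<phi>"
  unfolding sheaf_hom_def linmap_def by simp

lemma sheaf_hom_comp:
  assumes "sheaf_hom Q M \<rho> N \<sigma> \<psi>" "sheaf_hom Q N \<sigma> L \<tau> \<phi>" "is_sheaf Q N \<sigma>"
  shows "sheaf_hom Q M \<rho> L \<tau> (\<lambda>r x. \<phi> r (\<psi> r x))"
  unfolding sheaf_hom_def
proof (intro conjI ballI allI impI)
  fix q assume q: "q \<in> Q"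
  show "linmap (M q) (L q) (\<lambda>x. \<phi> q (\<psi> q x))"
    using sheaf_homD(1)[OF assms(1) q] sheaf_homD(1)[OF assms(2) q] unfolding linmap_def by auto
next
  fix q r x assume "q \<in> Q" "r \<in> Q" "q \<subseteq> r" "x \<in> M q"
  then show "\<phi> r (\<psi> r (\<rho> q r x)) = \<tau> q r (\<phi> q (\<psi> q x))"
    using sheaf_homD(2)[OF assms(1)] sheaf_homD(2)[OF assms(2)] sheaf_hom_in[OF assms(1)] by simp
next
  fix q x assume "q \<notin> Q \<or> x \<notin> M q"
  then show "\<phi> q (\<psi> q x) = 0"
  proof
    assume "q \<notin> Q" then show ?thesis using sheaf_homD(3)[OF assms(2)] by simp
  next
    assume x: "x \<notin> M q"
    show ?thesis
    proof (cases "q \<in> Q")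
      case True
      then show ?thesis using sheaf_homD(4)[OF assms(1) x] linmap_zero[OF is_sheafD(1)[OF assms(3) True] sheaf_homD(1)[OF assms(2) True]]
        by simp
    next
      case False then show ?thesis using sheaf_homD(3)[OF assms(2)] by simp
    qed
  qed
qed

lemma sheaf_hom_diff:
  assumes "sheaf_hom Q M \<rho> N \<sigma> \<phi>" "sheaf_hom Q M \<rho> N \<sigma> \<psi>" "is_sheaf Q M \<rho>" "is_sheaf Q N \<sigma>"
  shows "sheaf_hom Q M \<rho> N \<sigma> (\<lambda>r x. \<phi> r x - \<psi> r x)"
  unfolding sheaf_hom_def
proof (intro conjI ballI allI impI)
  fix q assume q: "q \<in> Q"
  note l1 = sheaf_homD(1)[OF assms(1) q] and l2 = sheaf_homD(1)[OF assms(2) q]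
  note sm = is_sheafD(1)[OF assms(4) q]
  show "linmap (M q) (N q) (\<lambda>x. \<phi> q x - \<psi> q x)"
    unfolding linmap_def
  proof (intro conjI ballI allI)
    fix x assume "x \<in> M q" then show "\<phi> q x - \<psi> q x \<in> N q"
      using linmap_in[OF l1] linmap_in[OF l2] submod_diff[OF sm] by blast
  next
    fix x y assume "x \<in> M q" "y \<in> M q"
    then show "\<phi> q (x + y) - \<psi> q (x + y) = \<phi> q x - \<psi> q x + (\<phi> q y - \<psi> q y)"
      using linmap_add[OF l1] linmap_add[OF l2] by (simp add: algebra_simps)
  next
    fix c x assume "x \<in> M q"
    then show "\<phi> q (smul c x) - \<psi> q (smul c x) = smul c (\<phi> q x - \<psi> q x)"
      using linmap_smul[OF l1] linmap_smul[OF l2] by (auto simp: fun_eq_iff algebra_simps)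
  qed
next
  fix q r x assume a: "q \<in> Q" "r \<in> Q" "q \<subseteq> r" "x \<in> M q"
  then show "\<phi> r (\<rho> q r x) - \<psi> r (\<rho> q r x) = \<sigma> q r (\<phi> q x - \<psi> q x)"
    using sheaf_homD(2)[OF assms(1) a] sheaf_homD(2)[OF assms(2) a]
      linmap_diff[OF is_sheafD(1)[OF assms(4) a(1)] is_sheafD(2)[OF assms(4) a(1-3)]]
      sheaf_hom_in[OF assms(1) a(1,4)] sheaf_hom_in[OF assms(2) a(1,4)] by simp
next
  fix q x assume "q \<notin> Q \<or> x \<notin> M q"
  then show "\<phi> q x - \<psi> q x = 0" using sheaf_homD(3,4)[OF assms(1)] sheaf_homD(3,4)[OF assms(2)] by auto
qed

lemma sheaf_hom_const_zero:
  assumes "is_sheaf Q N \<sigma>"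
  shows "sheaf_hom Q M \<rho> N \<sigma> (\<lambda>r x. 0)"
  unfolding sheaf_hom_def linmap_def
proof (intro conjI ballI allI impI)
  fix q r x assume "q \<in> Q" "r \<in> Q" "q \<subseteq> r"
  then show "0 = \<sigma> q r 0" using linmap_zero[OF is_sheafD(1)[OF assms] is_sheafD(2)[OF assms]] by metis
qed (auto simp: fun_eq_iff submod_zero is_sheafD[OF assms])

lemma sheaf_hom_id:
  assumes "is_sheaf Q M \<rho>"
  shows "sheaf_hom Q M \<rho> M \<rho> (\<lambda>r x. if r \<in> Q \<and> x \<in> M r then x else 0)"
  unfolding sheaf_hom_def linmap_def
proof (intro conjI ballI allI impI)
  fix q r x assume a: "q \<in> Q" "r \<in> Q" "q \<subseteq> r" "x \<in> M q"
  then show "(if r \<in> Q \<and> \<rho> q r x \<in> M r then \<rho> q r x else 0) = \<rho> q r (if q \<in> Q \<and> x \<in> M q then x else 0)"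
    using linmap_in[OF is_sheafD(2)[OF assms a(1-3)] a(4)] by simp
qed (use submod_add[OF is_sheafD(1)[OF assms]] submod_smul[OF is_sheafD(1)[OF assms]] in auto)

lemma kK_is_sheaf:
  assumes conv: "\<And>p s r. p \<in> Q \<Longrightarrow> s \<in> Q \<Longrightarrow> r \<in> Q \<Longrightarrow> p \<subseteq> s \<Longrightarrow> s \<subseteq> r \<Longrightarrow> p \<in> L \<Longrightarrow> r \<in> L \<Longrightarrow> s \<in> L"
  shows "is_sheaf Q (kK_stalk L :: nat set \<Rightarrow> 'k::comm_ring_1 vec set) (kK_res L)"
  unfolding is_sheaf_def
proof (intro conjI ballI impI allI)
  fix r :: "nat set" show "submod (kK_stalk L r :: 'k vec set)"
    unfolding kK_stalk_def using kline_submod[where 'k='k] zero_submod[where 'k='k] by simp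
next
  fix r s :: "nat set" assume "r \<subseteq> s"
  show "linmap (kK_stalk L r :: 'k vec set) (kK_stalk L s) (kK_res L r s)"
    unfolding linmap_def kK_stalk_def kK_res_def kline_def by (auto simp: fun_eq_iff)
next
  fix r :: "nat set" and x :: "'k vec" assume "x \<in> kK_stalk L r"
  then show "kK_res L r r x = x" unfolding kK_stalk_def kK_res_def by (auto split: if_splits)
next
  fix p s r and x :: "'k vec" assume a: "p \<in> Q" "s \<in> Q" "r \<in> Q" "p \<subseteq> s" "s \<subseteq> r" "x \<in> kK_stalk L p"
  show "kK_res L s r (kK_res L p s x) = kK_res L p r x"
  proof (cases "p \<in> L")
    case True
    then show ?thesis using conv[OF a(1-5) True] unfolding kK_res_def by auto
  next
    case False
    then have "x = 0" using a(6) unfolding kK_stalk_def by simp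
    then show ?thesis unfolding kK_res_def by simp
  qed
qed

lemma omega_is_sheaf: "is_sheaf (Uq n q) (omega_stalk n :: nat set \<Rightarrow> 'k::comm_ring_1 vec set) (omega_res n)"
  unfolding omega_stalk_def[abs_def] omega_res_def by (rule kK_is_sheaf) (auto simp: mem_Uq_iff)

lemma omega_stalk_ne: "r \<noteq> {1..n} \<Longrightarrow> omega_stalk n r = {0}"
  by (simp add: omega_stalk_def kK_stalk_def)

lemma omega_stalk_top: "omega_stalk n {1..n} = kline"
  by (simp add: omega_stalk_def kK_stalk_def)

lemma projectiveD:
  assumes "projective Q P \<rho>" "is_sheaf Q B \<rho>B" "is_sheaf Q C \<rho>C" "sheaf_hom Q B \<rho>B C \<rho>C g"
    "\<forall>q\<in>Q. g q ` B q = C q" "sheaf_hom Q P \<rho> C \<rho>C f"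
  shows "\<exists>h. sheaf_hom Q P \<rho> B \<rho>B h \<and> (\<forall>q\<in>Q. \<forall>x\<in>P q. g q (h q x) = f q x)"
proof -
  have "\<forall>B \<rho>B C \<rho>C g f. is_sheaf Q B \<rho>B \<longrightarrow> is_sheaf Q C \<rho>C \<longrightarrow>
        sheaf_hom Q B \<rho>B C \<rho>C g \<longrightarrow> (\<forall>q\<in>Q. g q ` B q = C q) \<longrightarrow>
        sheaf_hom Q P \<rho> C \<rho>C f \<longrightarrow>
        (\<exists>h. sheaf_hom Q P \<rho> B \<rho>B h \<and> (\<forall>q\<in>Q. \<forall>x\<in>P q. g q (h q x) = f q x))"
    using assms(1) unfolding projective_def .
  from this[rule_format, OF assms(2-4) _ assms(6)] assms(5) show ?thesis by blast
qed

lemma is_sheaf_image: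
  assumes B: "is_sheaf Q B \<rho>B" and C: "is_sheaf Q C \<rho>C" and g: "sheaf_hom Q B \<rho>B C \<rho>C g"
  shows "is_sheaf Q (\<lambda>r. g r ` B r) \<rho>C"
proof -
  have sub: "g r ` B r \<subseteq> C r" if "r \<in> Q" for r using sheaf_hom_in[OF g that] by blast
  show ?thesis
    unfolding is_sheaf_def
  proof (intro conjI ballI impI allI)
    fix q assume q: "q \<in> Q"
    note lg = sheaf_homD(1)[OF g q] and sB = is_sheafD(1)[OF B q]
    show "submod (g q ` B q)" unfolding submod_def
    proof (intro conjI ballI allI)
      show "0 \<in> g q ` B q" using linmap_zero[OF sB lg] submod_zero[OF sB] by force
    next
      fix x y assume "x \<in> g q ` B q" "y \<in> g q ` B q"
      then obtain a b where "a \<in> B q" "b \<in> B q" "x = g q a" "y = g q b" by blast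
      then show "x + y \<in> g q ` B q" using linmap_add[OF lg] submod_add[OF sB] by (metis image_eqI)
    next
      fix c x assume "x \<in> g q ` B q"
      then obtain a where "a \<in> B q" "x = g q a" by blast
      then show "smul c x \<in> g q ` B q" using linmap_smul[OF lg] submod_smul[OF sB] by (metis image_eqI)
    qed
  next
    fix q r assume qr: "q \<in> Q" "r \<in> Q" "q \<subseteq> r"
    have "\<rho>C q r (g q a) \<in> g r ` B r" if "a \<in> B q" for a
      using sheaf_homD(2)[OF g qr that] linmap_in[OF is_sheafD(2)[OF B qr] that] by (metis image_eqI)
    then show "linmap (g q ` B q) (g r ` B r) (\<rho>C q r)"
      by (intro linmap_mono[OF is_sheafD(2)[OF C qr] sub[OF qr(1)]]) blast
  next
    fix q x assume "q \<in> Q" "x \<in> g q ` B q"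
    then show "\<rho>C q q x = x" using is_sheafD(3)[OF C] sub by blast
  next
    fix p q r x assume "p \<in> Q" "q \<in> Q" "r \<in> Q" "p \<subseteq> q" "q \<subseteq> r" "x \<in> g p ` B p"
    then show "\<rho>C q r (\<rho>C p q x) = \<rho>C p r x" using is_sheafD(4)[OF C] sub by blast
  qed
qed

lemma projective_lift_into_image:
  assumes P: "projective Q P \<rho>" and B: "is_sheaf Q B \<rho>B" and C: "is_sheaf Q C \<rho>C"
    and g: "sheaf_hom Q B \<rho>B C \<rho>C g" and f: "sheaf_hom Q P \<rho> C \<rho>C f"
    and im: "\<forall>r\<in>Q. \<forall>x\<in>P r. f r x \<in> g r ` B r"
  shows "\<exists>h. sheaf_hom Q P \<rho> B \<rho>B h \<and> (\<forall>r\<in>Q. \<forall>x\<in>P r. g r (h r x) = f r x)"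
proof (rule projectiveD[OF P B is_sheaf_image[OF B C g]])
  show "sheaf_hom Q B \<rho>B (\<lambda>r. g r ` B r) \<rho>C g" by (rule sheaf_hom_codomain_mono[OF g]) auto
  show "sheaf_hom Q P \<rho> (\<lambda>r. g r ` B r) \<rho>C f" by (rule sheaf_hom_codomain_mono[OF f im])
qed auto

section \<open>Complexes, comparison maps and homotopies\<close>

text \<open>Complexes are augmented: degree 0 carries the sheaf being resolved and \<open>D 0\<close> is the
  augmentation. So exactness includes surjectivity of \<open>D 0\<close>, only the positive degrees are
  required to be projective, and homotopies vanish in degree 0.\<close>

definition sheaf_complex :: "nat set set \<Rightarrow> (nat \<Rightarrow> nat set \<Rightarrow> 'k::comm_ring_1 vec set)
   \<Rightarrow> (nat \<Rightarrow> nat set \<Rightarrow> nat set \<Rightarrow> 'k vec \<Rightarrow> 'k vec) \<Rightarrow> (nat \<Rightarrow> 'k shom) \<Rightarrow> bool" where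
  "sheaf_complex Q Z R D \<longleftrightarrow> (\<forall>j. is_sheaf Q (Z j) (R j)) \<and>
     (\<forall>j. sheaf_hom Q (Z (Suc j)) (R (Suc j)) (Z j) (R j) (D j)) \<and>
     (\<forall>j. \<forall>r\<in>Q. \<forall>x\<in>Z (Suc (Suc j)) r. D j r (D (Suc j) r x) = 0)"

definition exact_complex :: "nat set set \<Rightarrow> (nat \<Rightarrow> nat set \<Rightarrow> 'k::comm_ring_1 vec set)
   \<Rightarrow> (nat \<Rightarrow> nat set \<Rightarrow> nat set \<Rightarrow> 'k vec \<Rightarrow> 'k vec) \<Rightarrow> (nat \<Rightarrow> 'k shom) \<Rightarrow> bool" where
  "exact_complex Q Z R D \<longleftrightarrow> sheaf_complex Q Z R D \<and> (\<forall>r\<in>Q. D 0 r ` Z 1 r = Z 0 r) \<and>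
     (\<forall>j. \<forall>r\<in>Q. \<forall>x\<in>Z (Suc j) r. D j r x = 0 \<longrightarrow> x \<in> D (Suc j) r ` Z (Suc (Suc j)) r)"

definition projective_terms :: "nat set set \<Rightarrow> (nat \<Rightarrow> nat set \<Rightarrow> 'k::comm_ring_1 vec set)
   \<Rightarrow> (nat \<Rightarrow> nat set \<Rightarrow> nat set \<Rightarrow> 'k vec \<Rightarrow> 'k vec) \<Rightarrow> bool" where
  "projective_terms Q Z R \<longleftrightarrow> (\<forall>j. projective Q (Z (Suc j)) (R (Suc j)))"

definition chain_map :: "nat set set \<Rightarrow> (nat \<Rightarrow> nat set \<Rightarrow> 'k::comm_ring_1 vec set)
   \<Rightarrow> (nat \<Rightarrow> nat set \<Rightarrow> nat set \<Rightarrow> 'k vec \<Rightarrow> 'k vec) \<Rightarrow> (nat \<Rightarrow> 'k shom)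
   \<Rightarrow> (nat \<Rightarrow> nat set \<Rightarrow> 'k vec set)
   \<Rightarrow> (nat \<Rightarrow> nat set \<Rightarrow> nat set \<Rightarrow> 'k vec \<Rightarrow> 'k vec) \<Rightarrow> (nat \<Rightarrow> 'k shom) \<Rightarrow> (nat \<Rightarrow> 'k shom) \<Rightarrow> bool" where
  "chain_map Q Z R D W S E u \<longleftrightarrow> (\<forall>j. sheaf_hom Q (Z j) (R j) (W j) (S j) (u j)) \<and>
     (\<forall>j. \<forall>r\<in>Q. \<forall>x\<in>Z (Suc j) r. E j r (u (Suc j) r x) = u j r (D j r x))"

definition augment :: "'a \<Rightarrow> (nat \<Rightarrow> 'a) \<Rightarrow> nat \<Rightarrow> 'a" where
  "augment F P j = (case j of 0 \<Rightarrow> F | Suc i \<Rightarrow> P i)"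

lemma augment_simps[simp]: "augment F P 0 = F" "augment F P (Suc i) = P i"
  by (simp_all add: augment_def)

definition chain_homotopy :: "nat set set \<Rightarrow> (nat \<Rightarrow> nat set \<Rightarrow> 'k::comm_ring_1 vec set)
   \<Rightarrow> (nat \<Rightarrow> nat set \<Rightarrow> nat set \<Rightarrow> 'k vec \<Rightarrow> 'k vec) \<Rightarrow> (nat \<Rightarrow> 'k shom)
   \<Rightarrow> (nat \<Rightarrow> nat set \<Rightarrow> 'k vec set) \<Rightarrow> (nat \<Rightarrow> nat set \<Rightarrow> nat set \<Rightarrow> 'k vec \<Rightarrow> 'k vec) \<Rightarrow> (nat \<Rightarrow> 'k shom)
   \<Rightarrow> (nat \<Rightarrow> 'k shom) \<Rightarrow> (nat \<Rightarrow> 'k shom) \<Rightarrow> (nat \<Rightarrow> 'k shom) \<Rightarrow> bool" where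
  "chain_homotopy Q Z R D W S E u v h \<longleftrightarrow>
     (\<forall>j. sheaf_hom Q (Z j) (R j) (W (Suc j)) (S (Suc j)) (h j)) \<and> (\<forall>r x. h 0 r x = 0) \<and>
     (\<forall>j. \<forall>r\<in>Q. \<forall>x\<in>Z (Suc j) r. u (Suc j) r x - v (Suc j) r x = E (Suc j) r (h (Suc j) r x) + h j r (D j r x))"

definition chain_id :: "nat set set \<Rightarrow> (nat \<Rightarrow> nat set \<Rightarrow> 'k::comm_ring_1 vec set) \<Rightarrow> nat \<Rightarrow> 'k shom" where
  "chain_id Q Z j r x = (if r \<in> Q \<and> x \<in> Z j r then x else 0)"

lemma sheaf_complexD:
  assumes "sheaf_complex Q Z R D"
  shows "is_sheaf Q (Z j) (R j)" "sheaf_hom Q (Z (Suc j)) (R (Suc j)) (Z j) (R j) (D j)"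
    "r \<in> Q \<Longrightarrow> x \<in> Z (Suc (Suc j)) r \<Longrightarrow> D j r (D (Suc j) r x) = 0"
  using assms unfolding sheaf_complex_def by auto

lemma exact_complexD:
  assumes "exact_complex Q Z R D"
  shows "sheaf_complex Q Z R D" "r \<in> Q \<Longrightarrow> D 0 r ` Z 1 r = Z 0 r"
    "r \<in> Q \<Longrightarrow> x \<in> Z (Suc j) r \<Longrightarrow> D j r x = 0 \<Longrightarrow> x \<in> D (Suc j) r ` Z (Suc (Suc j)) r"
  using assms unfolding exact_complex_def by blast+

lemma chain_mapD:
  assumes "chain_map Q Z R D W S E u"
  shows "sheaf_hom Q (Z j) (R j) (W j) (S j) (u j)"
    "r \<in> Q \<Longrightarrow> x \<in> Z (Suc j) r \<Longrightarrow> E j r (u (Suc j) r x) = u j r (D j r x)"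
  using assms unfolding chain_map_def by auto

lemma chain_homotopyD:
  assumes "chain_homotopy Q Z R D W S E u v h"
  shows "sheaf_hom Q (Z j) (R j) (W (Suc j)) (S (Suc j)) (h j)" "h 0 r x = 0"
    "r \<in> Q \<Longrightarrow> x \<in> Z (Suc j) r \<Longrightarrow> u (Suc j) r x - v (Suc j) r x = E (Suc j) r (h (Suc j) r x) + h j r (D j r x)"
  using assms unfolding chain_homotopy_def by blast+

lemma chain_map_id:
  assumes Z: "sheaf_complex Q Z R D"
  shows "chain_map Q Z R D Z R D (chain_id Q Z)"
  unfolding chain_map_def
proof (intro conjI allI ballI)
  fix j show "sheaf_hom Q (Z j) (R j) (Z j) (R j) (chain_id Q Z j)"
    using sheaf_hom_id[OF sheaf_complexD(1)[OF Z]] by (simp add: chain_id_def[abs_def])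
next
  fix j r x assume rx: "r \<in> Q" "x \<in> Z (Suc j) r"
  then show "D j r (chain_id Q Z (Suc j) r x) = chain_id Q Z j r (D j r x)"
    using sheaf_hom_in[OF sheaf_complexD(2)[OF Z] rx] by (simp add: chain_id_def)
qed

lemma chain_map_comp:
  assumes u: "chain_map Q Z R D W S E u" and v: "chain_map Q W S E V T F v" and W: "sheaf_complex Q W S E"
  shows "chain_map Q Z R D V T F (\<lambda>j r x. v j r (u j r x))"
  unfolding chain_map_def
proof (intro conjI allI ballI)
  fix j show "sheaf_hom Q (Z j) (R j) (V j) (T j) (\<lambda>r x. v j r (u j r x))"
    by (rule sheaf_hom_comp[OF chain_mapD(1)[OF u] chain_mapD(1)[OF v] sheaf_complexD(1)[OF W]])
next
  fix j r x assume rx: "r \<in> Q" "x \<in> Z (Suc j) r"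
  have "F j r (v (Suc j) r (u (Suc j) r x)) = v j r (E j r (u (Suc j) r x))"
    using chain_mapD(2)[OF v rx(1) sheaf_hom_in[OF chain_mapD(1)[OF u] rx]] .
  also have "\<dots> = v j r (u j r (D j r x))" using chain_mapD(2)[OF u rx] by simp
  finally show "F j r (v (Suc j) r (u (Suc j) r x)) = v j r (u j r (D j r x))" .
qed

lemma chain_map_diff:
  assumes u: "chain_map Q Z R D W S E u" and v: "chain_map Q Z R D W S E v"
    and Z: "sheaf_complex Q Z R D" and W: "sheaf_complex Q W S E"
  shows "chain_map Q Z R D W S E (\<lambda>j r x. u j r x - v j r x)"
  unfolding chain_map_def
proof (intro conjI allI ballI)
  fix j show "sheaf_hom Q (Z j) (R j) (W j) (S j) (\<lambda>r x. u j r x - v j r x)"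
    by (rule sheaf_hom_diff[OF chain_mapD(1)[OF u] chain_mapD(1)[OF v] sheaf_complexD(1)[OF Z] sheaf_complexD(1)[OF W]])
next
  fix j r x assume rx: "r \<in> Q" "x \<in> Z (Suc j) r"
  show "E j r (u (Suc j) r x - v (Suc j) r x) = u j r (D j r x) - v j r (D j r x)"
    using linmap_diff[OF is_sheafD(1)[OF sheaf_complexD(1)[OF W] rx(1)] sheaf_homD(1)[OF sheaf_complexD(2)[OF W] rx(1)]
        sheaf_hom_in[OF chain_mapD(1)[OF u] rx] sheaf_hom_in[OF chain_mapD(1)[OF v] rx]]
      chain_mapD(2)[OF u rx] chain_mapD(2)[OF v rx] by simp
qed

text \<open>Comparison maps and homotopies are built degree by degree by dependent choice. The
  invariant carried along says that the next map to be lifted lands in the image of the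
  differential, so that projectivity applies; exactness re-establishes it one degree up.\<close>

lemma chain_map_step:
  assumes Z: "sheaf_complex Q Z R D" and PZ: "projective Q (Z (Suc j)) (R (Suc j))" and W: "exact_complex Q W S E"
    and u: "sheaf_hom Q (Z j) (R j) (W j) (S j) u"
    and im: "\<forall>r\<in>Q. \<forall>x\<in>Z (Suc j) r. u r (D j r x) \<in> E j r ` W (Suc j) r"
  obtains u' where "sheaf_hom Q (Z (Suc j)) (R (Suc j)) (W (Suc j)) (S (Suc j)) u'"
    and "\<forall>r\<in>Q. \<forall>x\<in>Z (Suc j) r. E j r (u' r x) = u r (D j r x)"
    and "\<forall>r\<in>Q. \<forall>x\<in>Z (Suc (Suc j)) r. u' r (D (Suc j) r x) \<in> E (Suc j) r ` W (Suc (Suc j)) r"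
proof -
  have Wc: "sheaf_complex Q W S E" using exact_complexD(1)[OF W] .
  have f: "sheaf_hom Q (Z (Suc j)) (R (Suc j)) (W j) (S j) (\<lambda>r x. u r (D j r x))"
    by (rule sheaf_hom_comp[OF sheaf_complexD(2)[OF Z] u sheaf_complexD(1)[OF Z]])
  obtain u' where u': "sheaf_hom Q (Z (Suc j)) (R (Suc j)) (W (Suc j)) (S (Suc j)) u'"
    and Eu': "\<forall>r\<in>Q. \<forall>x\<in>Z (Suc j) r. E j r (u' r x) = u r (D j r x)"
    using projective_lift_into_image[OF PZ sheaf_complexD(1)[OF Wc] sheaf_complexD(1)[OF Wc]
        sheaf_complexD(2)[OF Wc] f im] by blast
  have "u' r (D (Suc j) r x) \<in> E (Suc j) r ` W (Suc (Suc j)) r"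
    if r: "r \<in> Q" and x: "x \<in> Z (Suc (Suc j)) r" for r x
  proof (rule exact_complexD(3)[OF W r])
    have Dx: "D (Suc j) r x \<in> Z (Suc j) r" using sheaf_hom_in[OF sheaf_complexD(2)[OF Z] r x] .
    show "u' r (D (Suc j) r x) \<in> W (Suc j) r" using sheaf_hom_in[OF u' r Dx] .
    show "E j r (u' r (D (Suc j) r x)) = 0"
      using Eu' r Dx sheaf_complexD(3)[OF Z r x] sheaf_hom_map_zero[OF u sheaf_complexD(1)[OF Z]] by simp
  qed
  then show ?thesis using that u' Eu' by blast
qed

lemma chain_map_lift:
  assumes Z: "sheaf_complex Q Z R D" and PZ: "projective_terms Q Z R" and W: "exact_complex Q W S E"
    and u0: "sheaf_hom Q (Z 0) (R 0) (W 0) (S 0) u0"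
  shows "\<exists>u. chain_map Q Z R D W S E u \<and> u 0 = u0"
proof -
  define Inv where "Inv j uj \<longleftrightarrow> sheaf_hom Q (Z j) (R j) (W j) (S j) uj \<and>
      (\<forall>r\<in>Q. \<forall>x\<in>Z (Suc j) r. uj r (D j r x) \<in> E j r ` W (Suc j) r)" for j uj
  define Step where "Step j uj u' \<longleftrightarrow> sheaf_hom Q (Z (Suc j)) (R (Suc j)) (W (Suc j)) (S (Suc j)) u' \<and>
      (\<forall>r\<in>Q. \<forall>x\<in>Z (Suc j) r. E j r (u' r x) = uj r (D j r x))" for j uj u'
  have "Inv 0 u0"
    unfolding Inv_def
    using u0 exact_complexD(2)[OF W] sheaf_hom_in[OF u0] sheaf_hom_in[OF sheaf_complexD(2)[OF Z]] by auto
  moreover have "\<exists>u'. Inv (Suc j) u' \<and> Step j uj u'" if "Inv j uj" for j uj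
  proof -
    have PZj: "projective Q (Z (Suc j)) (R (Suc j))" using PZ unfolding projective_terms_def by blast
    have uj: "sheaf_hom Q (Z j) (R j) (W j) (S j) uj"
      and im: "\<forall>r\<in>Q. \<forall>x\<in>Z (Suc j) r. uj r (D j r x) \<in> E j r ` W (Suc j) r"
      using that unfolding Inv_def by blast+
    obtain u' where "sheaf_hom Q (Z (Suc j)) (R (Suc j)) (W (Suc j)) (S (Suc j)) u'"
      and "\<forall>r\<in>Q. \<forall>x\<in>Z (Suc j) r. E j r (u' r x) = uj r (D j r x)"
      and "\<forall>r\<in>Q. \<forall>x\<in>Z (Suc (Suc j)) r. u' r (D (Suc j) r x) \<in> E (Suc j) r ` W (Suc (Suc j)) r"
      by (rule chain_map_step[OF Z PZj W uj im])
    then show ?thesis unfolding Inv_def Step_def by blast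
  qed
  ultimately obtain u where u: "\<forall>j. (Inv j (u j) \<and> (j = 0 \<longrightarrow> u j = u0)) \<and> Step j (u j) (u (Suc j))"
    using dependent_nat_choice[of "\<lambda>j uj. Inv j uj \<and> (j = 0 \<longrightarrow> uj = u0)" Step] by blast
  have "chain_map Q Z R D W S E u"
    unfolding chain_map_def using u unfolding Inv_def Step_def by blast
  then show ?thesis using u by blast
qed

lemma chain_homotopy_step:
  assumes Z: "sheaf_complex Q Z R D" and PZ: "projective Q (Z (Suc j)) (R (Suc j))" and W: "exact_complex Q W S E"
    and w: "chain_map Q Z R D W S E w"
    and h: "sheaf_hom Q (Z j) (R j) (W (Suc j)) (S (Suc j)) h"
    and im: "\<forall>r\<in>Q. \<forall>x\<in>Z (Suc j) r. w (Suc j) r x - h r (D j r x) \<in> E (Suc j) r ` W (Suc (Suc j)) r"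
  obtains h' where "sheaf_hom Q (Z (Suc j)) (R (Suc j)) (W (Suc (Suc j))) (S (Suc (Suc j))) h'"
    and "\<forall>r\<in>Q. \<forall>x\<in>Z (Suc j) r. E (Suc j) r (h' r x) = w (Suc j) r x - h r (D j r x)"
    and "\<forall>r\<in>Q. \<forall>x\<in>Z (Suc (Suc j)) r.
      w (Suc (Suc j)) r x - h' r (D (Suc j) r x) \<in> E (Suc (Suc j)) r ` W (Suc (Suc (Suc j))) r"
proof -
  have Wc: "sheaf_complex Q W S E" using exact_complexD(1)[OF W] .
  note W_submod = is_sheafD(1)[OF sheaf_complexD(1)[OF Wc]]
    and E_lin = sheaf_homD(1)[OF sheaf_complexD(2)[OF Wc]]
  have hD: "sheaf_hom Q (Z (Suc j)) (R (Suc j)) (W (Suc j)) (S (Suc j)) (\<lambda>r x. h r (D j r x))"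
    by (rule sheaf_hom_comp[OF sheaf_complexD(2)[OF Z] h sheaf_complexD(1)[OF Z]])
  have g: "sheaf_hom Q (Z (Suc j)) (R (Suc j)) (W (Suc j)) (S (Suc j)) (\<lambda>r x. w (Suc j) r x - h r (D j r x))"
    by (rule sheaf_hom_diff[OF chain_mapD(1)[OF w] hD sheaf_complexD(1)[OF Z] sheaf_complexD(1)[OF Wc]])
  obtain h' where h': "sheaf_hom Q (Z (Suc j)) (R (Suc j)) (W (Suc (Suc j))) (S (Suc (Suc j))) h'"
    and Eh': "\<forall>r\<in>Q. \<forall>x\<in>Z (Suc j) r. E (Suc j) r (h' r x) = w (Suc j) r x - h r (D j r x)"
    using projective_lift_into_image[OF PZ sheaf_complexD(1)[OF Wc] sheaf_complexD(1)[OF Wc]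
        sheaf_complexD(2)[OF Wc] g im] by blast
  have "w (Suc (Suc j)) r x - h' r (D (Suc j) r x) \<in> E (Suc (Suc j)) r ` W (Suc (Suc (Suc j))) r"
    if r: "r \<in> Q" and x: "x \<in> Z (Suc (Suc j)) r" for r x
  proof (rule exact_complexD(3)[OF W r])
    have Dx: "D (Suc j) r x \<in> Z (Suc j) r" using sheaf_hom_in[OF sheaf_complexD(2)[OF Z] r x] .
    have wx: "w (Suc (Suc j)) r x \<in> W (Suc (Suc j)) r" using sheaf_hom_in[OF chain_mapD(1)[OF w] r x] .
    note h'Dx = sheaf_hom_in[OF h' r Dx]
    show "w (Suc (Suc j)) r x - h' r (D (Suc j) r x) \<in> W (Suc (Suc j)) r"
      by (rule submod_diff[OF W_submod[OF r] wx h'Dx])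
    have "E (Suc j) r (w (Suc (Suc j)) r x - h' r (D (Suc j) r x))
        = w (Suc j) r (D (Suc j) r x) - E (Suc j) r (h' r (D (Suc j) r x))"
      using linmap_diff[OF W_submod[OF r] E_lin[OF r] wx h'Dx] chain_mapD(2)[OF w r x] by simp
    also have "\<dots> = h r (D j r (D (Suc j) r x))" using Eh' r Dx by simp
    also have "\<dots> = 0"
      using sheaf_complexD(3)[OF Z r x] sheaf_hom_map_zero[OF h sheaf_complexD(1)[OF Z]] by simp
    finally show "E (Suc j) r (w (Suc (Suc j)) r x - h' r (D (Suc j) r x)) = 0" .
  qed
  then show ?thesis using that h' Eh' by blast
qed

lemma chain_homotopy_exists:
  assumes Z: "sheaf_complex Q Z R D" and PZ: "projective_terms Q Z R" and W: "exact_complex Q W S E"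
    and u: "chain_map Q Z R D W S E u" and v: "chain_map Q Z R D W S E v"
    and uv0: "\<forall>r\<in>Q. \<forall>x\<in>Z 0 r. u 0 r x = v 0 r x"
  shows "\<exists>h. chain_homotopy Q Z R D W S E u v h"
proof -
  have Wc: "sheaf_complex Q W S E" using exact_complexD(1)[OF W] .
  define w where "w j r x = u j r x - v j r x" for j r x
  have w: "chain_map Q Z R D W S E w"
    unfolding w_def[abs_def] by (rule chain_map_diff[OF u v Z Wc])
  define Inv where "Inv j hj \<longleftrightarrow> sheaf_hom Q (Z j) (R j) (W (Suc j)) (S (Suc j)) hj \<and> (j = 0 \<longrightarrow> hj = (\<lambda>r x. 0)) \<and>
      (\<forall>r\<in>Q. \<forall>x\<in>Z (Suc j) r. w (Suc j) r x - hj r (D j r x) \<in> E (Suc j) r ` W (Suc (Suc j)) r)" for j hj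
  define Step where "Step j hj h' \<longleftrightarrow> sheaf_hom Q (Z (Suc j)) (R (Suc j)) (W (Suc (Suc j))) (S (Suc (Suc j))) h' \<and>
      (\<forall>r\<in>Q. \<forall>x\<in>Z (Suc j) r. E (Suc j) r (h' r x) = w (Suc j) r x - hj r (D j r x))" for j hj h'
  have "Inv 0 (\<lambda>r x. 0)"
    unfolding Inv_def
  proof (intro conjI ballI impI refl sheaf_hom_const_zero[OF sheaf_complexD(1)[OF Wc]])
    fix r x assume r: "r \<in> Q" and x: "x \<in> Z (Suc 0) r"
    have "E 0 r (w (Suc 0) r x) = 0"
      using chain_mapD(2)[OF w r x] uv0 r sheaf_hom_in[OF sheaf_complexD(2)[OF Z] r x] by (simp add: w_def)
    then show "w (Suc 0) r x - 0 \<in> E (Suc 0) r ` W (Suc (Suc 0)) r"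
      using exact_complexD(3)[OF W r sheaf_hom_in[OF chain_mapD(1)[OF w] r x]] by simp
  qed
  moreover have "\<exists>h'. Inv (Suc j) h' \<and> Step j hj h'" if "Inv j hj" for j hj
  proof -
    have PZj: "projective Q (Z (Suc j)) (R (Suc j))" using PZ unfolding projective_terms_def by blast
    have hj: "sheaf_hom Q (Z j) (R j) (W (Suc j)) (S (Suc j)) hj"
      and im: "\<forall>r\<in>Q. \<forall>x\<in>Z (Suc j) r. w (Suc j) r x - hj r (D j r x) \<in> E (Suc j) r ` W (Suc (Suc j)) r"
      using that unfolding Inv_def by blast+
    obtain h' where "sheaf_hom Q (Z (Suc j)) (R (Suc j)) (W (Suc (Suc j))) (S (Suc (Suc j))) h'"
      and "\<forall>r\<in>Q. \<forall>x\<in>Z (Suc j) r. E (Suc j) r (h' r x) = w (Suc j) r x - hj r (D j r x)"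
      and "\<forall>r\<in>Q. \<forall>x\<in>Z (Suc (Suc j)) r.
        w (Suc (Suc j)) r x - h' r (D (Suc j) r x) \<in> E (Suc (Suc j)) r ` W (Suc (Suc (Suc j))) r"
      by (rule chain_homotopy_step[OF Z PZj W w hj im])
    then have "Inv (Suc j) h' \<and> Step j hj h'" unfolding Inv_def Step_def by simp
    then show ?thesis by blast
  qed
  ultimately obtain h where h: "\<forall>j. Inv j (h j) \<and> Step j (h j) (h (Suc j))"
    using dependent_nat_choice[of Inv Step] by blast
  have "chain_homotopy Q Z R D W S E u v h"
    unfolding chain_homotopy_def
  proof (intro conjI allI ballI)
    fix j show "sheaf_hom Q (Z j) (R j) (W (Suc j)) (S (Suc j)) (h j)" using h unfolding Inv_def by blast
  next
    fix r x show "h 0 r x = 0" using h unfolding Inv_def by simp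
  next
    fix j r x assume "r \<in> Q" "x \<in> Z (Suc j) r"
    then have "E (Suc j) r (h (Suc j) r x) = w (Suc j) r x - h j r (D j r x)"
      using h unfolding Step_def by blast
    then show "u (Suc j) r x - v (Suc j) r x = E (Suc j) r (h (Suc j) r x) + h j r (D j r x)"
      by (simp add: w_def)
  qed
  then show ?thesis by blast
qed

section \<open>The Koszul resolution of the skyscraper at \<open>q\<close>\<close>

text \<open>Vectors \<open>nat \<Rightarrow> k\<close> are read as finitely supported combinations of finite sets of
  coordinates, a set \<open>S\<close> being the index \<open>set_encode S\<close>. The \<open>j\<close>-th Koszul term at \<open>r\<close> consists
  of the combinations of \<open>j\<close>-subsets of \<open>r - q\<close>; its restriction maps are inclusions.\<close>

definition koszul :: "nat set \<Rightarrow> nat \<Rightarrow> nat set \<Rightarrow> 'k::comm_ring_1 vec set" where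
  "koszul q j r = {x. \<forall>N. x N \<noteq> 0 \<longrightarrow> set_decode N \<subseteq> r - q \<and> card (set_decode N) = j}"

definition koszul_sign :: "nat \<Rightarrow> nat set \<Rightarrow> 'k::comm_ring_1" where
  "koszul_sign b S = (-1) ^ card {c\<in>S. c < b}"

definition koszul_d :: "nat \<Rightarrow> 'k::comm_ring_1 vec \<Rightarrow> 'k vec" where
  "koszul_d n x N = (\<Sum>b\<in>{1..n} - set_decode N. koszul_sign b (set_decode N) * x (set_encode (insert b (set_decode N))))"

definition koszul_h :: "nat \<Rightarrow> 'k::comm_ring_1 vec \<Rightarrow> 'k vec" where
  "koszul_h a x N = (if a \<in> set_decode N then x (set_encode (set_decode N - {a})) else 0)"

lemma koszulD: "x \<in> koszul q j r \<Longrightarrow> x N \<noteq> 0 \<Longrightarrow> set_decode N \<subseteq> r - q \<and> card (set_decode N) = j"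
  unfolding koszul_def by blast

lemma koszulD_encode: "x \<in> koszul q j r \<Longrightarrow> finite S \<Longrightarrow> x (set_encode S) \<noteq> 0 \<Longrightarrow> S \<subseteq> r - q \<and> card S = j"
  using koszulD[of x q j r "set_encode S"] by simp

lemma koszul_submod: "submod (koszul q j r :: 'k::comm_ring_1 vec set)"
  unfolding submod_def
proof (intro conjI ballI allI)
  show "0 \<in> koszul q j r" unfolding koszul_def by simp
next
  fix x y :: "'k vec" assume xy: "x \<in> koszul q j r" "y \<in> koszul q j r"
  show "x + y \<in> koszul q j r" unfolding koszul_def
  proof (intro CollectI allI impI)
    fix N assume "(x + y) N \<noteq> 0"
    then have "x N \<noteq> 0 \<or> y N \<noteq> 0" by auto
    then show "set_decode N \<subseteq> r - q \<and> card (set_decode N) = j" using koszulD[OF xy(1)] koszulD[OF xy(2)] by blast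
  qed
next
  fix c and x :: "'k vec" assume x: "x \<in> koszul q j r"
  show "smul c x \<in> koszul q j r" unfolding koszul_def
  proof (intro CollectI allI impI)
    fix N assume "smul c x N \<noteq> 0"
    then have "x N \<noteq> 0" by auto
    then show "set_decode N \<subseteq> r - q \<and> card (set_decode N) = j" using koszulD[OF x] by blast
  qed
qed

lemma koszul_mono: assumes "r \<subseteq> s" shows "koszul q j r \<subseteq> koszul q j s"
proof
  fix x assume x: "x \<in> koszul q j r"
  show "x \<in> koszul q j s" unfolding koszul_def
  proof (intro CollectI allI impI)
    fix N assume "x N \<noteq> 0"
    then show "set_decode N \<subseteq> s - q \<and> card (set_decode N) = j" using koszulD[OF x] assms by blast
  qed
qed

lemma koszul_0_eq_kline: "koszul q 0 r = kline"
proof (intro set_eqI iffI)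
  fix x :: "'a vec" assume x: "x \<in> koszul q 0 r"
  show "x \<in> kline" unfolding kline_def
  proof (intro CollectI allI impI)
    fix N :: nat assume "N \<noteq> 0"
    show "x N = 0"
    proof (rule ccontr)
      assume "x N \<noteq> 0"
      then have "card (set_decode N) = 0" using koszulD[OF x] by blast
      then have "set_decode N = {}" by simp
      then have "N = 0" by (metis set_decode_inverse set_encode_empty)
      then show False using \<open>N \<noteq> 0\<close> by simp
    qed
  qed
next
  fix x :: "'a vec" assume x: "x \<in> kline"
  show "x \<in> koszul q 0 r" unfolding koszul_def
  proof (intro CollectI allI impI)
    fix N assume "x N \<noteq> 0"
    then have "N = 0" using x unfolding kline_def by blast
    then show "set_decode N \<subseteq> r - q \<and> card (set_decode N) = 0" by simp
  qed
qed

lemma koszul_Suc_base: "koszul q (Suc j) q = {0}"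
proof (intro set_eqI iffI)
  fix x :: "'a vec" assume x: "x \<in> koszul q (Suc j) q"
  have "x N = 0" for N
  proof (rule ccontr)
    assume "x N \<noteq> 0"
    then have "set_decode N \<subseteq> q - q \<and> card (set_decode N) = Suc j" using koszulD[OF x] by blast
    then have "set_decode N = {}" "card (set_decode N) = Suc j" by auto
    then show False by simp
  qed
  then show "x \<in> {0}" by (simp add: fun_eq_iff)
qed (simp add: koszul_def)

lemma koszul_d_add: "koszul_d n (x + y) = koszul_d n x + koszul_d n y"
  by (rule ext) (simp add: koszul_d_def distrib_left sum.distrib)

lemma koszul_d_smul: "koszul_d n (smul c x) = smul c (koszul_d n x)"
  by (rule ext) (simp add: koszul_d_def sum_distrib_left algebra_simps)

lemma koszul_d_zero: "koszul_d n 0 = 0"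
  by (rule ext) (simp add: koszul_d_def)

lemma koszul_d_in:
  assumes x: "x \<in> koszul q (Suc j) r"
  shows "koszul_d n x \<in> koszul q j r"
  unfolding koszul_def
proof (intro CollectI allI impI)
  fix N assume "koszul_d n x N \<noteq> 0"
  then obtain b where b: "b \<in> {1..n} - set_decode N"
    "x (set_encode (insert b (set_decode N))) \<noteq> 0"
  proof -
    have "(\<Sum>b\<in>{1..n} - set_decode N. koszul_sign b (set_decode N) * x (set_encode (insert b (set_decode N)))) \<noteq> 0"
      using \<open>koszul_d n x N \<noteq> 0\<close> unfolding koszul_d_def .
    then obtain b where "b \<in> {1..n} - set_decode N" "koszul_sign b (set_decode N) * x (set_encode (insert b (set_decode N))) \<noteq> 0"
      using sum.neutral by meson
    then show ?thesis using that by (metis mult_zero_right)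
  qed
  have "insert b (set_decode N) \<subseteq> r - q \<and> card (insert b (set_decode N)) = Suc j"
    using koszulD_encode[OF x _ b(2)] by simp
  then show "set_decode N \<subseteq> r - q \<and> card (set_decode N) = j" using b(1) by simp
qed

lemma koszul_d_degree_0: "x \<in> koszul q 0 r \<Longrightarrow> koszul_d n x = 0"
  using koszul_d_in[of x q "0 - 1"]
proof -
  assume x: "x \<in> koszul q 0 r"
  show "koszul_d n x = 0"
  proof (rule ext)
    fix N
    have "x (set_encode (insert b (set_decode N))) = 0" for b
    proof (rule ccontr)
      assume "x (set_encode (insert b (set_decode N))) \<noteq> 0"
      from koszulD_encode[OF x finite_insert[THEN iffD2, OF finite_set_decode] this] show False by simp
    qed
    then show "koszul_d n x N = 0 N" unfolding koszul_d_def by (simp del: set_encode_insert)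
  qed
qed

lemma koszul_sign_insert:
  assumes "finite T" "b \<notin> T"
  shows "koszul_sign c (insert b T) = (if b < c then - koszul_sign c T else (koszul_sign c T :: 'k::comm_ring_1))"
proof (cases "b < c")
  case True
  then have "{x\<in>insert b T. x < c} = insert b {x\<in>T. x < c}" by auto
  then show ?thesis using True assms by (simp add: koszul_sign_def)
next
  case False
  then have "{x\<in>insert b T. x < c} = {x\<in>T. x < c}" by auto
  then show ?thesis using False by (simp add: koszul_sign_def)
qed

lemma koszul_sign_eq_one:
  assumes "\<forall>c\<in>T. \<not> c < b" shows "koszul_sign b T = 1"
proof -
  have e: "{c\<in>T. c < b} = {}" using assms by auto
  show ?thesis unfolding koszul_sign_def e by simp
qed

lemma koszul_sign_swap:
  assumes "finite T" "b \<notin> T" "c \<notin> T" "b \<noteq> c"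
  shows "koszul_sign b T * koszul_sign c (insert b T) = - (koszul_sign c T * (koszul_sign b (insert c T) :: 'k::comm_ring_1))"
  using assms by (cases "b < c") (simp_all add: koszul_sign_insert)

lemma sum_offdiag_antisym_eq_0:
  fixes f :: "'a \<Rightarrow> 'a \<Rightarrow> 'b::ab_group_add"
  assumes "finite V" "\<And>b c. b \<in> V \<Longrightarrow> c \<in> V \<Longrightarrow> b \<noteq> c \<Longrightarrow> f b c + f c b = 0"
  shows "(\<Sum>b\<in>V. \<Sum>c\<in>V - {b}. f b c) = 0"
  using assms
proof (induction V rule: finite_induct)
  case (insert a V)
  have "insert a V - {b} = insert a (V - {b})" if "b \<in> V" for b using that insert(2) by auto
  then have "(\<Sum>b\<in>insert a V. \<Sum>c\<in>insert a V - {b}. f b c)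
      = (\<Sum>c\<in>V. f a c + f c a) + (\<Sum>b\<in>V. \<Sum>c\<in>V - {b}. f b c)"
    using insert(1,2) by (simp add: sum.distrib algebra_simps)
  also have "(\<Sum>c\<in>V. f a c + f c a) = 0"
    using insert(2,4) by (intro sum.neutral) (metis insertCI)
  finally show ?case using insert by simp
qed simp

lemma koszul_d_d: "koszul_d n (koszul_d n (x :: 'k::comm_ring_1 vec)) = 0"
proof (rule ext)
  fix N
  define T where "T = set_decode N"
  define V where "V = {1..n} - T"
  define f where "f b c = koszul_sign b T * (koszul_sign c (insert b T) * x (set_encode (insert c (insert b T))))" for b c
  have fT: "finite T" by (simp add: T_def)
  have "koszul_d n (koszul_d n x) N = (\<Sum>b\<in>V. \<Sum>c\<in>V - {b}. f b c)"
  proof -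
    have "{1..n} - insert b T = V - {b}" for b by (auto simp: V_def)
    then show ?thesis
      unfolding koszul_d_def[of n "koszul_d n x"] koszul_d_def[of n x] f_def V_def T_def[symmetric]
      by (simp add: fT sum_distrib_left del: set_encode_insert)
  qed
  also have "\<dots> = 0"
  proof (rule sum_offdiag_antisym_eq_0)
    fix b c assume bc: "b \<in> V" "c \<in> V" "b \<noteq> c"
    have "insert c (insert b T) = insert b (insert c T)" by blast
    then have "f b c + f c b = (koszul_sign b T * koszul_sign c (insert b T) + koszul_sign c T * koszul_sign b (insert c T))
        * x (set_encode (insert b (insert c T)))"
      unfolding f_def by (simp add: algebra_simps)
    also have "\<dots> = 0"
    proof -
      have "koszul_sign b T * koszul_sign c (insert b T) = - (koszul_sign c T * (koszul_sign b (insert c T) :: 'k))"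
        by (rule koszul_sign_swap[OF fT]) (use bc in \<open>auto simp: V_def\<close>)
      then show ?thesis by simp
    qed
    finally show "f b c + f c b = 0" .
  qed (simp add: V_def)
  finally show "koszul_d n (koszul_d n x) N = 0 N" by simp
qed

lemma koszul_h_in:
  assumes a: "a \<in> r - q" and x: "x \<in> koszul q j r"
  shows "koszul_h a x \<in> koszul q (Suc j) r"
  unfolding koszul_def
proof (intro CollectI allI impI)
  fix N assume h: "koszul_h a x N \<noteq> 0"
  define T where "T = set_decode N"
  have fT: "finite T" by (simp add: T_def)
  have aT: "a \<in> T" and xn: "x (set_encode (T - {a})) \<noteq> 0" using h unfolding koszul_h_def T_def[symmetric]
    by (auto split: if_splits)
  have "T - {a} \<subseteq> r - q \<and> card (T - {a}) = j" using koszulD_encode[OF x _ xn] fT by simp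
  then show "set_decode N \<subseteq> r - q \<and> card (set_decode N) = Suc j"
    unfolding T_def[symmetric] using aT a fT
    by (metis Diff_empty Diff_insert0 card_Diff_singleton card.remove insert_Diff insert_subset)
qed

lemma koszul_h_zero: "koszul_h a 0 = 0"
  by (rule ext) (simp add: koszul_h_def)

text \<open>The contraction with the least coordinate \<open>a\<close> of \<open>r - q\<close> is a homotopy from the identity
  to zero: the sign of \<open>a\<close> relative to any support inside \<open>r - q\<close> is \<open>+1\<close>, and the remaining
  terms of \<open>d (h x)\<close> and \<open>h (d x)\<close> cancel in pairs.\<close>

context
  fixes n :: nat and q r :: "nat set" and a :: nat and x :: "'k::comm_ring_1 vec" and j :: nat
  assumes r_sub: "r \<subseteq> {1..n}" and a: "a \<in> r - q" and a_least: "\<forall>c\<in>r - q. a \<le> c"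
    and x: "x \<in> koszul q j r"
begin

lemma koszul_sign_least: "S \<subseteq> set_decode N \<Longrightarrow> a \<notin> S \<Longrightarrow> koszul_sign a S * x N = x N"
proof (cases "x N = 0")
  case False
  assume "S \<subseteq> set_decode N" "a \<notin> S"
  then have "\<forall>c\<in>S. \<not> c < a" using koszulD[OF x False] a_least by (meson Diff_iff leD subset_iff)
  then show ?thesis by (simp add: koszul_sign_eq_one)
qed simp

lemma koszul_contraction_not_mem:
  assumes aT: "a \<notin> set_decode N"
  shows "koszul_d n (koszul_h a x) N + koszul_h a (koszul_d n x) N = x N"
proof -
  define T where "T = set_decode N"
  have fT: "finite T" and aT': "a \<notin> T" and NT: "set_encode T = N" using aT by (simp_all add: T_def)
  have aU: "a \<in> {1..n} - T" using a r_sub aT' by auto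
  have "koszul_d n (koszul_h a x) N
      = (\<Sum>b\<in>{1..n} - T. if b = a then koszul_sign a T * x (set_encode T) else 0)"
    unfolding koszul_d_def koszul_h_def T_def[symmetric]
    by (rule sum.cong[OF refl]) (use aT' fT in \<open>auto simp del: set_encode_insert\<close>)
  also have "\<dots> = x N" using aU koszul_sign_least[of T] aT' by (simp add: NT T_def)
  finally show ?thesis using aT by (simp add: koszul_h_def)
qed

lemma koszul_contraction_mem:
  assumes aT: "a \<in> set_decode N"
  shows "koszul_d n (koszul_h a x) N + koszul_h a (koszul_d n x) N = x N"
proof -
  define T where "T = set_decode N"
  define T' where "T' = T - {a}"
  define U where "U = {1..n} - T"
  have fT': "finite T'" and aT': "a \<notin> T'" and T: "T = insert a T'" and NT: "set_encode T = N"
    using aT by (auto simp: T_def T'_def)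
  have U': "{1..n} - T' = insert a U" and aU: "a \<notin> U" using a r_sub T aT' by (auto simp: U_def)
  have L: "koszul_d n (koszul_h a x) N = (\<Sum>b\<in>U. koszul_sign b T * x (set_encode (insert b T')))"
    unfolding koszul_d_def koszul_h_def T_def[symmetric] U_def[symmetric]
    by (rule sum.cong[OF refl]) (use fT' T aT' in \<open>auto simp: U_def insert_Diff_if simp del: set_encode_insert\<close>)
  have "koszul_h a (koszul_d n x) N = koszul_d n x (set_encode T')"
    using aT by (simp add: koszul_h_def T_def T'_def)
  also have "\<dots> = (\<Sum>b\<in>{1..n} - T'. koszul_sign b T' * x (set_encode (insert b T')))"
    using fT' by (simp add: koszul_d_def del: set_encode_insert)
  also have "\<dots> = koszul_sign a T' * x N + (\<Sum>b\<in>U. koszul_sign b T' * x (set_encode (insert b T')))"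
    unfolding U' using aU by (simp add: U_def T[symmetric] NT del: set_encode_insert)
  finally have R: "koszul_h a (koszul_d n x) N
      = koszul_sign a T' * x N + (\<Sum>b\<in>U. koszul_sign b T' * x (set_encode (insert b T')))" .
  have "koszul_sign b T * x (set_encode (insert b T')) + koszul_sign b T' * x (set_encode (insert b T')) = 0"
    if b: "b \<in> U" for b
  proof (cases "x (set_encode (insert b T')) = 0")
    case False
    then have "insert b T' \<subseteq> r - q" using koszulD_encode[OF x _ False] fT' by simp
    then have "a < b" using a_least b aU by (metis insert_subset le_neq_implies_less)
    then show ?thesis unfolding T by (simp add: koszul_sign_insert[OF fT' aT'])
  qed simp
  then have "(\<Sum>b\<in>U. koszul_sign b T * x (set_encode (insert b T')))
      + (\<Sum>b\<in>U. koszul_sign b T' * x (set_encode (insert b T'))) = 0"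
    by (simp add: sum.distrib[symmetric])
  moreover have "koszul_sign a T' * x N = x N" using koszul_sign_least[of T'] by (simp add: T_def T'_def)
  ultimately show ?thesis using L R by (simp add: algebra_simps)
qed

lemma koszul_contraction: "koszul_d n (koszul_h a x) + koszul_h a (koszul_d n x) = x"
  using koszul_contraction_mem koszul_contraction_not_mem by (intro ext) (metis plus_fun_apply)

end

definition koszul_hom :: "nat \<Rightarrow> nat set \<Rightarrow> nat \<Rightarrow> 'k::comm_ring_1 shom" where
  "koszul_hom n q j r x = (if r \<in> Uq n q \<and> x \<in> koszul q (Suc j) r then koszul_d n x else 0)"

definition koszul_aug :: "nat set \<Rightarrow> 'k::comm_ring_1 shom" where
  "koszul_aug q r x = (if r = q \<and> x \<in> kline then x else 0)"

abbreviation aug_koszul :: "nat set set \<Rightarrow> nat set \<Rightarrow> nat \<Rightarrow> nat set \<Rightarrow> 'k::comm_ring_1 vec set" where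
  "aug_koszul K q \<equiv> augment (kK_stalk K) (koszul q)"

abbreviation aug_koszul_res :: "nat set set \<Rightarrow> nat \<Rightarrow> nat set \<Rightarrow> nat set \<Rightarrow> 'k::comm_ring_1 vec \<Rightarrow> 'k vec" where
  "aug_koszul_res K \<equiv> augment (kK_res K) (\<lambda>_ r s x. x)"

abbreviation aug_koszul_diff :: "nat \<Rightarrow> nat set \<Rightarrow> nat \<Rightarrow> 'k::comm_ring_1 shom" where
  "aug_koszul_diff n q \<equiv> augment (koszul_aug q) (koszul_hom n q)"

lemma koszul_is_sheaf: "is_sheaf Q (koszul q j :: nat set \<Rightarrow> 'k::comm_ring_1 vec set) (\<lambda>r s x. x)"
  unfolding is_sheaf_def
proof (intro conjI ballI impI allI)
  fix r :: "nat set" show "submod (koszul q j r :: 'k vec set)" by (rule koszul_submod)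
next
  fix r s :: "nat set" assume "r \<subseteq> s"
  then have "koszul q j r \<subseteq> (koszul q j s :: 'k vec set)" by (rule koszul_mono)
  then show "linmap (koszul q j r :: 'k vec set) (koszul q j s) (\<lambda>x. x)"
    unfolding linmap_def by blast
qed auto

lemma koszul_hom_sheaf_hom:
  shows "sheaf_hom (Uq n q) (koszul q (Suc j)) (\<lambda>r s x. x) (koszul q j) (\<lambda>r s x. x) (koszul_hom n q j :: 'k::comm_ring_1 shom)"
  unfolding sheaf_hom_def
proof (intro conjI ballI impI allI)
  fix r assume r: "r \<in> Uq n q"
  show "linmap (koszul q (Suc j) r) (koszul q j r) (koszul_hom n q j r :: 'k vec \<Rightarrow> 'k vec)"
    unfolding linmap_def
  proof (intro conjI ballI allI)
    fix x :: "'k vec" assume "x \<in> koszul q (Suc j) r"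
    then show "koszul_hom n q j r x \<in> koszul q j r" using r koszul_d_in by (simp add: koszul_hom_def)
  next
    fix x y :: "'k vec" assume "x \<in> koszul q (Suc j) r" "y \<in> koszul q (Suc j) r"
    moreover then have "x + y \<in> koszul q (Suc j) r" using submod_add[OF koszul_submod] by blast
    ultimately show "koszul_hom n q j r (x + y) = koszul_hom n q j r x + koszul_hom n q j r y" using r by (simp add: koszul_hom_def koszul_d_add)
  next
    fix c and x :: "'k vec" assume "x \<in> koszul q (Suc j) r"
    moreover then have "smul c x \<in> koszul q (Suc j) r" using submod_smul[OF koszul_submod] by blast
    ultimately show "koszul_hom n q j r (smul c x) = smul c (koszul_hom n q j r x)" using r by (simp add: koszul_hom_def koszul_d_smul)
  qed
next
  fix r s and x :: "'k vec" assume "r \<in> Uq n q" "s \<in> Uq n q" "r \<subseteq> s" "x \<in> koszul q (Suc j) r"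
  then show "koszul_hom n q j s x = koszul_hom n q j r x" using koszul_mono[of r s q "Suc j"] by (auto simp: koszul_hom_def)
next
  fix r and x :: "'k vec" assume "r \<notin> Uq n q \<or> x \<notin> koszul q (Suc j) r"
  then show "koszul_hom n q j r x = 0" by (auto simp: koszul_hom_def)
qed

lemma koszul_aug_sheaf_hom:
  assumes hq: "q \<in> Uq n q" and KQ: "\<forall>r\<in>Uq n q. r \<in> K \<longleftrightarrow> r = q"
  shows "sheaf_hom (Uq n q) (koszul q 0) (\<lambda>r s x. x) (kK_stalk K) (kK_res K) (koszul_aug q :: 'k::comm_ring_1 shom)"
  unfolding sheaf_hom_def koszul_0_eq_kline
proof (intro conjI ballI impI allI)
  fix r assume r: "r \<in> Uq n q"
  show "linmap kline (kK_stalk K r) (koszul_aug q r :: 'k vec \<Rightarrow> 'k vec)"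
  proof (cases "r = q")
    case True
    then have "r \<in> K" using KQ r by blast
    then show ?thesis using True unfolding linmap_def koszul_aug_def kK_stalk_def
      using submod_add[OF kline_submod] submod_smul[OF kline_submod] by auto
  next
    case False
    then have "r \<notin> K" using KQ r by blast
    then show ?thesis using False unfolding linmap_def koszul_aug_def kK_stalk_def by (auto simp: fun_eq_iff)
  qed
next
  fix r s and x :: "'k vec" assume a: "r \<in> Uq n q" "s \<in> Uq n q" "r \<subseteq> s" "x \<in> kline"
  show "koszul_aug q s x = kK_res K r s (koszul_aug q r x)"
  proof (cases "s = q")
    case True
    then have "r = q" using a mem_Uq_iff by blast
    then show ?thesis using True KQ a unfolding koszul_aug_def kK_res_def by auto
  next
    case False
    then have "s \<notin> K" using KQ a by blast
    then show ?thesis using False unfolding koszul_aug_def kK_res_def by auto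
  qed
next
  fix r and x :: "'k vec" assume "r \<notin> Uq n q \<or> x \<notin> kline"
  then show "koszul_aug q r x = 0" using hq unfolding koszul_aug_def by auto
qed

lemma koszul_cycle_is_boundary:
  assumes r: "r \<in> Uq n q" and rq: "r \<noteq> q" and x: "x \<in> koszul q j r" and dx: "koszul_d n x = (0 :: 'k::comm_ring_1 vec)"
  shows "koszul_h (Min (r - q)) x \<in> koszul q (Suc j) r \<and> x = koszul_d n (koszul_h (Min (r - q)) x)"
proof -
  have rs: "r \<subseteq> {1..n}" "q \<subseteq> r" using r mem_Uq_iff by auto
  then have fin: "finite (r - q)" by (meson finite_Diff finite_atLeastAtMost finite_subset)
  have ne: "r - q \<noteq> {}" using rs rq by blast
  define a where "a = Min (r - q)"
  have a: "a \<in> r - q" unfolding a_def using Min_in[OF fin ne] .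
  have amin: "\<forall>c\<in>r - q. a \<le> c" unfolding a_def using Min_le[OF fin] by blast
  have "koszul_d n (koszul_h a x) + koszul_h a (koszul_d n x) = x" by (rule koszul_contraction[OF rs(1) a amin x])
  then have "x = koszul_d n (koszul_h a x)" unfolding dx koszul_h_zero by simp
  then show ?thesis using koszul_h_in[OF a x] unfolding a_def by simp
qed

context
  fixes n :: nat and q :: "nat set" and K :: "nat set set"
  assumes q_in: "q \<in> Uq n q" and K_near_q: "\<forall>r\<in>Uq n q. r \<in> K \<longleftrightarrow> r = q"
begin

lemma aug_koszul_sheaf_complex:
  "sheaf_complex (Uq n q) (aug_koszul K q) (aug_koszul_res K) (aug_koszul_diff n q :: nat \<Rightarrow> 'k::comm_ring_1 shom)"
  unfolding sheaf_complex_def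
proof (intro conjI allI ballI)
  fix j show "is_sheaf (Uq n q) (aug_koszul K q j :: nat set \<Rightarrow> 'k vec set) (aug_koszul_res K j)"
    using kK_is_sheaf[of "Uq n q" K] koszul_is_sheaf K_near_q by (cases j) auto
next
  fix j show "sheaf_hom (Uq n q) (aug_koszul K q (Suc j)) (aug_koszul_res K (Suc j)) (aug_koszul K q j)
      (aug_koszul_res K j) (aug_koszul_diff n q j :: 'k shom)"
    using koszul_aug_sheaf_hom[OF q_in K_near_q] koszul_hom_sheaf_hom by (cases j) simp_all
next
  fix j r and x :: "'k vec" assume r: "r \<in> Uq n q" and x: "x \<in> aug_koszul K q (Suc (Suc j)) r"
  show "aug_koszul_diff n q j r (aug_koszul_diff n q (Suc j) r x) = 0"
  proof (cases j)
    case 0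
    show ?thesis
    proof (cases "r = q")
      case True
      then have "x = 0" using x 0 koszul_Suc_base by auto
      then show ?thesis using 0 True by (simp add: koszul_hom_def koszul_aug_def koszul_d_zero)
    qed (simp add: 0 koszul_aug_def)
  next
    case (Suc i)
    then show ?thesis
      using r x koszul_d_in[of x q "Suc i" r] koszul_d_d[of n x] by (simp add: koszul_hom_def)
  qed
qed

lemma aug_koszul_exact_0:
  assumes r: "r \<in> Uq n q"
  shows "koszul_aug q r ` koszul q 0 r = (kK_stalk K r :: 'k::comm_ring_1 vec set)"
proof (cases "r = q")
  case True
  then show ?thesis using K_near_q r by (auto simp: koszul_0_eq_kline koszul_aug_def kK_stalk_def image_def)
next
  case False
  moreover have "(0::'k vec) \<in> kline" by (simp add: kline_def)
  ultimately show ?thesis using K_near_q r by (auto simp: koszul_0_eq_kline koszul_aug_def kK_stalk_def image_def)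
qed

lemma aug_koszul_exact_Suc:
  assumes r: "r \<in> Uq n q" and x: "x \<in> koszul q j r" and dx: "aug_koszul_diff n q j r x = (0 :: 'k::comm_ring_1 vec)"
  shows "x \<in> koszul_hom n q j r ` koszul q (Suc j) r"
proof (cases "r = q")
  case True
  have "x = 0"
  proof (cases j)
    case 0 then show ?thesis using dx x True by (simp add: koszul_aug_def koszul_0_eq_kline)
  next
    case (Suc i) then show ?thesis using x True koszul_Suc_base by auto
  qed
  moreover have "koszul_hom n q j r 0 = 0" by (simp add: koszul_hom_def koszul_d_zero)
  ultimately show ?thesis using submod_zero[OF koszul_submod] by (metis image_eqI)
next
  case False
  have "koszul_d n x = 0"
  proof (cases j)
    case 0 then show ?thesis using koszul_d_degree_0 x by simp
  next
    case (Suc i) then show ?thesis using dx x r by (simp add: koszul_hom_def)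
  qed
  from koszul_cycle_is_boundary[OF r False x this]
  show ?thesis using r by (force simp: koszul_hom_def)
qed

lemma aug_koszul_exact:
  "exact_complex (Uq n q) (aug_koszul K q) (aug_koszul_res K) (aug_koszul_diff n q :: nat \<Rightarrow> 'k::comm_ring_1 shom)"
  unfolding exact_complex_def
  by (intro conjI ballI allI impI aug_koszul_sheaf_complex) (simp_all add: aug_koszul_exact_0 aug_koszul_exact_Suc)

end

section \<open>Homomorphisms out of the Koszul terms\<close>

definition unit_vec :: "nat set \<Rightarrow> 'k::comm_ring_1 vec" where
  "unit_vec S = (\<lambda>N. if N = set_encode S then 1 else 0)"

definition koszul_basis :: "nat \<Rightarrow> nat set \<Rightarrow> nat \<Rightarrow> nat set \<Rightarrow> nat set set" where
  "koszul_basis n q j r = {S. S \<subseteq> {1..n} - q \<and> card S = j \<and> S \<subseteq> r}"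

lemma finite_koszul_basis: "finite (koszul_basis n q j r)"
proof -
  have "koszul_basis n q j r \<subseteq> Pow {1..n}" unfolding koszul_basis_def by auto
  then show ?thesis by (rule finite_subset) simp
qed

lemma koszul_basisD: "S \<in> koszul_basis n q j r \<Longrightarrow> S \<subseteq> {1..n} - q \<and> card S = j \<and> S \<subseteq> r \<and> finite S"
  unfolding koszul_basis_def by (auto intro: finite_subset)

lemma unit_vec_in_koszul:
  assumes "S \<in> koszul_basis n q j r" shows "(unit_vec S :: 'k::comm_ring_1 vec) \<in> koszul q j r"
  unfolding koszul_def
proof (intro CollectI allI impI)
  fix N assume "unit_vec S N \<noteq> (0::'k)"
  then have "N = set_encode S" unfolding unit_vec_def by (auto split: if_splits)
  then show "set_decode N \<subseteq> r - q \<and> card (set_decode N) = j" using koszul_basisD[OF assms] by auto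
qed

lemma koszul_basis_expansion:
  assumes r: "r \<in> Uq n q" and x: "x \<in> koszul q j r"
  shows "x = (\<Sum>S\<in>koszul_basis n q j r. smul (x (set_encode S)) (unit_vec S :: 'k::comm_ring_1 vec))"
proof (rule ext)
  fix N
  define T where "T = set_decode N"
  have rs: "r \<subseteq> {1..n}" using r mem_Uq_iff by blast
  have "(\<Sum>S\<in>koszul_basis n q j r. smul (x (set_encode S)) (unit_vec S :: 'k vec)) N
      = (\<Sum>S\<in>koszul_basis n q j r. if S = T then x N else 0)"
    unfolding sum_apply
  proof (rule sum.cong[OF refl])
    fix S assume "S \<in> koszul_basis n q j r"
    then have fS: "finite S" using koszul_basisD by blast
    have "N = set_encode S \<longleftrightarrow> S = T" unfolding T_def using fS by auto
    then show "smul (x (set_encode S)) (unit_vec S) N = (if S = T then x N else 0)"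
      unfolding unit_vec_def T_def by auto
  qed
  also have "\<dots> = (if T \<in> koszul_basis n q j r then x N else 0)" using finite_koszul_basis by simp
  also have "\<dots> = x N"
  proof (cases "x N = 0")
    case False
    then have "T \<subseteq> r - q \<and> card T = j" using koszulD[OF x] unfolding T_def by blast
    then have "T \<in> koszul_basis n q j r" unfolding koszul_basis_def using rs by auto
    then show ?thesis by simp
  qed simp
  finally show "x N = (\<Sum>S\<in>koszul_basis n q j r. smul (x (set_encode S)) (unit_vec S :: 'k vec)) N" by simp
qed

lemma koszul_generator:
  assumes "q \<subseteq> {1..n}" and "S \<in> koszul_basis n q j r"
  shows "q \<union> S \<in> Uq n q" and "unit_vec S \<in> koszul q j (q \<union> S)" and "r \<in> Uq n q \<Longrightarrow> q \<union> S \<subseteq> r"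
  using assms koszul_basisD[OF assms(2)]
  by (auto simp: mem_Uq_iff koszul_basis_def intro!: unit_vec_in_koszul)

lemma koszul_sheaf_hom_expansion:
  assumes \<phi>: "sheaf_hom (Uq n q) (koszul q j) (\<lambda>r s x. x) N \<sigma> \<phi>"
    and r: "r \<in> Uq n q" and x: "x \<in> koszul q j r"
  shows "\<phi> r x = (\<Sum>S\<in>koszul_basis n q j r. smul (x (set_encode S)) (\<phi> r (unit_vec S)))"
proof -
  note l = sheaf_homD(1)[OF \<phi> r]
  have "\<phi> r x = \<phi> r (\<Sum>S\<in>koszul_basis n q j r. smul (x (set_encode S)) (unit_vec S))"
    using koszul_basis_expansion[OF r x] by simp
  also have "\<dots> = (\<Sum>S\<in>koszul_basis n q j r. \<phi> r (smul (x (set_encode S)) (unit_vec S)))"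
    by (rule linmap_sum[OF koszul_submod l finite_koszul_basis])
       (use submod_smul[OF koszul_submod] unit_vec_in_koszul in blast)
  finally show ?thesis using linmap_smul[OF l unit_vec_in_koszul] by simp
qed

text \<open>The Koszul terms are free on the generators \<open>unit_vec S\<close> living at \<open>q \<union> S\<close>: a
  homomorphism is determined by, and may be prescribed by, its values there.\<close>

lemma koszul_sheaf_hom_eqI:
  assumes q_sub: "q \<subseteq> {1..n}"
    and \<phi>: "sheaf_hom (Uq n q) (koszul q j) (\<lambda>r s x. x) N \<sigma> \<phi>"
    and \<psi>: "sheaf_hom (Uq n q) (koszul q j) (\<lambda>r s x. x) N \<sigma> \<psi>"
    and gen: "\<And>S. S \<in> koszul_basis n q j {1..n} \<Longrightarrow> \<phi> (q \<union> S) (unit_vec S) = \<psi> (q \<union> S) (unit_vec S)"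
  shows "\<phi> r x = \<psi> r x"
proof (cases "r \<in> Uq n q \<and> x \<in> koszul q j r")
  case True
  then have r: "r \<in> Uq n q" and x: "x \<in> koszul q j r" by auto
  have "\<phi> r (unit_vec S) = \<psi> r (unit_vec S)" if S: "S \<in> koszul_basis n q j r" for S
  proof -
    note gS = koszul_generator[OF q_sub S]
    have "S \<in> koszul_basis n q j {1..n}" using S by (auto simp: koszul_basis_def)
    then show ?thesis
      using sheaf_homD(2)[OF \<phi> gS(1) r gS(3)[OF r] gS(2)] sheaf_homD(2)[OF \<psi> gS(1) r gS(3)[OF r] gS(2)]
        gen by simp
  qed
  then show ?thesis
    unfolding koszul_sheaf_hom_expansion[OF \<phi> r x] koszul_sheaf_hom_expansion[OF \<psi> r x] by simp
qed (use sheaf_homD(3,4)[OF \<phi>] sheaf_homD(3,4)[OF \<psi>] in auto)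

definition koszul_extend :: "nat \<Rightarrow> nat set \<Rightarrow> nat \<Rightarrow> (nat set \<Rightarrow> nat set \<Rightarrow> 'k::comm_ring_1 vec) \<Rightarrow> 'k shom" where
  "koszul_extend n q j w r x =
     (if r \<in> Uq n q \<and> x \<in> koszul q j r then \<Sum>S\<in>koszul_basis n q j r. smul (x (set_encode S)) (w r S) else 0)"

lemma koszul_extend_eq:
  "r \<in> Uq n q \<Longrightarrow> x \<in> koszul q j r \<Longrightarrow>
    koszul_extend n q j w r x = (\<Sum>S\<in>koszul_basis n q j r. smul (x (set_encode S)) (w r S))"
  by (simp add: koszul_extend_def)

lemma koszul_extend_linmap:
  fixes B :: "nat set \<Rightarrow> 'k::comm_ring_1 vec set"
  assumes sB: "submod (B r)" and r: "r \<in> Uq n q"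
    and w_in: "\<And>S. S \<in> koszul_basis n q j r \<Longrightarrow> w r S \<in> B r"
  shows "linmap (koszul q j r) (B r) (koszul_extend n q j w r)"
  unfolding linmap_def
proof (intro conjI ballI allI)
  fix x :: "'k vec" assume x: "x \<in> koszul q j r"
  show "koszul_extend n q j w r x \<in> B r" unfolding koszul_extend_eq[OF r x]
    by (rule submod_sum[OF sB finite_koszul_basis]) (use submod_smul[OF sB] w_in in blast)
next
  fix x y :: "'k vec" assume x: "x \<in> koszul q j r" and y: "y \<in> koszul q j r"
  have xy: "x + y \<in> koszul q j r" using submod_add[OF koszul_submod x y] .
  show "koszul_extend n q j w r (x + y) = koszul_extend n q j w r x + koszul_extend n q j w r y"
    unfolding koszul_extend_eq[OF r x] koszul_extend_eq[OF r y] koszul_extend_eq[OF r xy]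
    by (simp only: plus_fun_apply smul_add_left sum.distrib)
next
  fix c and x :: "'k vec" assume x: "x \<in> koszul q j r"
  have cx: "smul c x \<in> koszul q j r" using submod_smul[OF koszul_submod x] .
  show "koszul_extend n q j w r (smul c x) = smul c (koszul_extend n q j w r x)"
    unfolding koszul_extend_eq[OF r x] koszul_extend_eq[OF r cx] by (simp only: smul_apply smul_mult smul_sum)
qed

lemma koszul_extend_restrict:
  assumes B: "is_sheaf (Uq n q) B \<rho>B"
    and w_in: "\<And>r S. r \<in> Uq n q \<Longrightarrow> S \<in> koszul_basis n q j r \<Longrightarrow> w r S \<in> B r"
    and w_res: "\<And>r s S. r \<in> Uq n q \<Longrightarrow> s \<in> Uq n q \<Longrightarrow> r \<subseteq> s \<Longrightarrow> S \<in> koszul_basis n q j r \<Longrightarrow>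
      w s S = \<rho>B r s (w r S)"
    and rs: "r \<in> Uq n q" "s \<in> Uq n q" "r \<subseteq> s" and x: "x \<in> koszul q j r"
  shows "koszul_extend n q j w s x = \<rho>B r s (koszul_extend n q j w r x)"
proof -
  note lrs = is_sheafD(2)[OF B rs]
  have xs: "x \<in> koszul q j s" using koszul_mono[OF rs(3)] x by blast
  have sub: "koszul_basis n q j r \<subseteq> koszul_basis n q j s" using rs(3) unfolding koszul_basis_def by auto
  have "koszul_extend n q j w s x = (\<Sum>S\<in>koszul_basis n q j s. smul (x (set_encode S)) (w s S))"
    by (rule koszul_extend_eq[OF rs(2) xs])
  also have "\<dots> = (\<Sum>S\<in>koszul_basis n q j r. smul (x (set_encode S)) (w s S))"
  proof (rule sum.mono_neutral_right[OF finite_koszul_basis sub], rule ballI)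
    fix S assume S: "S \<in> koszul_basis n q j s - koszul_basis n q j r"
    then have fS: "finite S" using koszul_basisD by blast
    have "x (set_encode S) = 0"
    proof (rule ccontr)
      assume "x (set_encode S) \<noteq> 0"
      then have "S \<subseteq> r - q" using koszulD_encode[OF x fS] by blast
      then show False using S unfolding koszul_basis_def by auto
    qed
    then show "smul (x (set_encode S)) (w s S) = 0" by (simp add: smul_zero_left)
  qed
  also have "\<dots> = (\<Sum>S\<in>koszul_basis n q j r. \<rho>B r s (smul (x (set_encode S)) (w r S)))"
  proof (rule sum.cong[OF refl])
    fix S assume S: "S \<in> koszul_basis n q j r"
    show "smul (x (set_encode S)) (w s S) = \<rho>B r s (smul (x (set_encode S)) (w r S))"
      using w_res[OF rs S] linmap_smul[OF lrs w_in[OF rs(1) S]] by simp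
  qed
  also have "\<dots> = \<rho>B r s (koszul_extend n q j w r x)"
    unfolding koszul_extend_eq[OF rs(1) x]
    by (rule linmap_sum[OF is_sheafD(1)[OF B rs(1)] lrs finite_koszul_basis, symmetric])
       (use submod_smul[OF is_sheafD(1)[OF B rs(1)]] w_in[OF rs(1)] in blast)
  finally show ?thesis .
qed

lemma koszul_extend_sheaf_hom:
  fixes B :: "nat set \<Rightarrow> 'k::comm_ring_1 vec set"
  assumes B: "is_sheaf (Uq n q) B \<rho>B"
    and w_in: "\<And>r S. r \<in> Uq n q \<Longrightarrow> S \<in> koszul_basis n q j r \<Longrightarrow> w r S \<in> B r"
    and w_res: "\<And>r s S. r \<in> Uq n q \<Longrightarrow> s \<in> Uq n q \<Longrightarrow> r \<subseteq> s \<Longrightarrow> S \<in> koszul_basis n q j r \<Longrightarrow>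
      w s S = \<rho>B r s (w r S)"
  shows "sheaf_hom (Uq n q) (koszul q j) (\<lambda>r s x. x) B \<rho>B (koszul_extend n q j w)"
  unfolding sheaf_hom_def
proof (intro conjI ballI allI impI)
  fix r assume r: "r \<in> Uq n q"
  show "linmap (koszul q j r) (B r) (koszul_extend n q j w r)"
    by (rule koszul_extend_linmap[where B = B and w = w, OF is_sheafD(1)[OF B r] r w_in[OF r]])
next
  fix r s and x :: "'k vec" assume rs: "r \<in> Uq n q" "s \<in> Uq n q" "r \<subseteq> s" and x: "x \<in> koszul q j r"
  show "koszul_extend n q j w s x = \<rho>B r s (koszul_extend n q j w r x)"
    using koszul_extend_restrict[OF B w_in w_res rs x] .
next
  fix r and x :: "'k vec" assume "r \<notin> Uq n q \<or> x \<notin> koszul q j r"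
  then show "koszul_extend n q j w r x = 0" by (auto simp: koszul_extend_def)
qed

lemma koszul_extend_unit_vec:
  fixes w :: "nat set \<Rightarrow> nat set \<Rightarrow> 'k::comm_ring_1 vec"
  assumes r: "r \<in> Uq n q" and S: "S \<in> koszul_basis n q j r"
  shows "koszul_extend n q j w r (unit_vec S) = w r S"
proof -
  have "smul (unit_vec S (set_encode S')) (w r S') = (if S' = S then w r S else 0)"
    if "S' \<in> koszul_basis n q j r" for S'
  proof -
    have "unit_vec S (set_encode S') = (if S' = S then 1 else (0 :: 'k))"
      using koszul_basisD[OF that] koszul_basisD[OF S] by (auto simp: unit_vec_def set_encode_eq)
    then show ?thesis by (simp add: smul_zero_left smul_one_left)
  qed
  then have "koszul_extend n q j w r (unit_vec S)
      = (\<Sum>S'\<in>koszul_basis n q j r. if S' = S then w r S else 0)"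
    unfolding koszul_extend_eq[OF r unit_vec_in_koszul[OF S]] by (rule sum.cong[OF refl])
  also have "\<dots> = w r S" using S finite_koszul_basis by simp
  finally show ?thesis .
qed

lemma koszul_sheaf_hom_from_generators:
  assumes q_sub: "q \<subseteq> {1..n}" and B: "is_sheaf (Uq n q) B \<rho>B"
    and b: "\<And>S. S \<in> koszul_basis n q j {1..n} \<Longrightarrow> b S \<in> B (q \<union> S)"
  shows "\<exists>h. sheaf_hom (Uq n q) (koszul q j) (\<lambda>r s x. x) B \<rho>B h \<and>
    (\<forall>S\<in>koszul_basis n q j {1..n}. h (q \<union> S) (unit_vec S) = b S)"
proof -
  define w where "w r S = \<rho>B (q \<union> S) r (b S)" for r S
  have gen: "S \<in> koszul_basis n q j {1..n}" if "S \<in> koszul_basis n q j r" for r S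
    using that by (auto simp: koszul_basis_def)
  show ?thesis
  proof (intro exI[of _ "koszul_extend n q j w"] conjI ballI)
    show "sheaf_hom (Uq n q) (koszul q j) (\<lambda>r s x. x) B \<rho>B (koszul_extend n q j w)"
    proof (rule koszul_extend_sheaf_hom[OF B])
      fix r S assume r: "r \<in> Uq n q" and S: "S \<in> koszul_basis n q j r"
      note gS = koszul_generator[OF q_sub S]
      show "w r S \<in> B r"
        unfolding w_def by (rule linmap_in[OF is_sheafD(2)[OF B gS(1) r gS(3)[OF r]] b[OF gen[OF S]]])
    next
      fix r s S assume rs: "r \<in> Uq n q" "s \<in> Uq n q" "r \<subseteq> s" and S: "S \<in> koszul_basis n q j r"
      note gS = koszul_generator[OF q_sub S]
      show "w s S = \<rho>B r s (w r S)"
        unfolding w_def by (rule is_sheafD(4)[OF B gS(1) rs(1,2) gS(3)[OF rs(1)] rs(3) b[OF gen[OF S]], symmetric])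
    qed
  next
    fix S assume S: "S \<in> koszul_basis n q j {1..n}"
    then have S': "S \<in> koszul_basis n q j (q \<union> S)" by (auto simp: koszul_basis_def)
    have "koszul_extend n q j w (q \<union> S) (unit_vec S) = w (q \<union> S) S"
      by (rule koszul_extend_unit_vec[OF koszul_generator(1)[OF q_sub S] S'])
    also have "\<dots> = b S"
      unfolding w_def by (rule is_sheafD(3)[OF B koszul_generator(1)[OF q_sub S] b[OF S]])
    finally show "koszul_extend n q j w (q \<union> S) (unit_vec S) = b S" .
  qed
qed

lemma koszul_projective:
  assumes q_sub: "q \<subseteq> {1..n}"
  shows "projective (Uq n q) (koszul q j :: nat set \<Rightarrow> 'k::comm_ring_1 vec set) (\<lambda>r s x. x)"
  unfolding projective_def
proof (intro allI impI)
  fix B \<rho>B C \<rho>C g and f :: "'k shom"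
  assume B: "is_sheaf (Uq n q) B \<rho>B" and C: "is_sheaf (Uq n q) C \<rho>C" and g: "sheaf_hom (Uq n q) B \<rho>B C \<rho>C g"
    and g_surj: "\<forall>p\<in>Uq n q. g p ` B p = C p" and f: "sheaf_hom (Uq n q) (koszul q j) (\<lambda>r s x. x) C \<rho>C f"
  have "\<forall>S\<in>koszul_basis n q j {1..n}. \<exists>b. b \<in> B (q \<union> S) \<and> g (q \<union> S) b = f (q \<union> S) (unit_vec S)"
  proof
    fix S assume "S \<in> koszul_basis n q j {1..n}"
    note gS = koszul_generator[OF q_sub this]
    have "g (q \<union> S) ` B (q \<union> S) = C (q \<union> S)" using g_surj gS(1) by blast
    then have "f (q \<union> S) (unit_vec S) \<in> g (q \<union> S) ` B (q \<union> S)"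
      using sheaf_hom_in[OF f gS(1,2)] by simp
    then obtain b where "b \<in> B (q \<union> S)" "f (q \<union> S) (unit_vec S) = g (q \<union> S) b" by (rule imageE)
    then show "\<exists>b. b \<in> B (q \<union> S) \<and> g (q \<union> S) b = f (q \<union> S) (unit_vec S)" by auto
  qed
  then have "\<exists>b. \<forall>S\<in>koszul_basis n q j {1..n}. b S \<in> B (q \<union> S) \<and> g (q \<union> S) (b S) = f (q \<union> S) (unit_vec S)"
    by (rule bchoice)
  then obtain b where b_spec: "\<forall>S\<in>koszul_basis n q j {1..n}. b S \<in> B (q \<union> S) \<and> g (q \<union> S) (b S) = f (q \<union> S) (unit_vec S)" ..
  have bB: "\<And>S. S \<in> koszul_basis n q j {1..n} \<Longrightarrow> b S \<in> B (q \<union> S)" using b_spec by blast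
  obtain h where h: "sheaf_hom (Uq n q) (koszul q j) (\<lambda>r s x. x) B \<rho>B h"
    and hb: "\<forall>S\<in>koszul_basis n q j {1..n}. h (q \<union> S) (unit_vec S) = b S"
    using koszul_sheaf_hom_from_generators[OF q_sub B bB] by blast
  have "g r (h r x) = f r x" for r x
  proof (rule koszul_sheaf_hom_eqI[OF q_sub sheaf_hom_comp[OF h g B] f])
    fix S assume S: "S \<in> koszul_basis n q j {1..n}"
    show "g (q \<union> S) (h (q \<union> S) (unit_vec S)) = f (q \<union> S) (unit_vec S)"
      using hb b_spec S by simp
  qed
  then show "\<exists>h. sheaf_hom (Uq n q) (koszul q j) (\<lambda>r s x. x) B \<rho>B h \<and> (\<forall>p\<in>Uq n q. \<forall>x\<in>koszul q j p. g p (h p x) = f p x)"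
    using h by blast
qed

lemma top_unit_vec_in_koszul: "(unit_vec ({1..n} - q) :: 'k::comm_ring_1 vec) \<in> koszul q (card ({1..n} - q)) {1..n}"
  by (rule unit_vec_in_koszul) (auto simp: koszul_basis_def)

text \<open>The only generator of a Koszul term living at the top point \<open>{1..n}\<close>, the one stalk
  where \<open>\<omega>\<close> is nonzero, is \<open>{1..n} - q\<close>, in degree \<open>n - |q|\<close>.\<close>

lemma hom_koszul_omega_vanishes:
  assumes q_sub: "q \<subseteq> {1..n}"
    and \<psi>: "sheaf_hom (Uq n q) (koszul q j) (\<lambda>r s x. x) (omega_stalk n) (omega_res n) (\<psi> :: 'k::comm_ring_1 shom)"
    and top: "j = card ({1..n} - q) \<Longrightarrow> \<psi> {1..n} (unit_vec ({1..n} - q)) = 0"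
  shows "\<psi> r x = 0"
proof -
  have "\<psi> r x = (\<lambda>r x. 0) r x"
  proof (rule koszul_sheaf_hom_eqI[OF q_sub \<psi> sheaf_hom_const_zero[OF omega_is_sheaf]])
    fix S assume S: "S \<in> koszul_basis n q j {1..n}"
    note gS = koszul_generator[OF q_sub S]
    show "\<psi> (q \<union> S) (unit_vec S) = 0"
    proof (cases "q \<union> S = {1..n}")
      case True
      then have "S = {1..n} - q" using koszul_basisD[OF S] by auto
      then show ?thesis using top koszul_basisD[OF S] True by auto
    next
      case False
      then show ?thesis using sheaf_hom_in[OF \<psi> gS(1,2)] by (simp add: omega_stalk_ne)
    qed
  qed
  then show ?thesis by simp
qed

lemma top_hom_exists:
  assumes q_sub: "q \<subseteq> {1..n}"
  obtains \<psi> :: "'k::comm_ring_1 shom"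
  where "sheaf_hom (Uq n q) (koszul q (card ({1..n} - q))) (\<lambda>r s x. x) (omega_stalk n) (omega_res n) \<psi>"
    and "\<psi> {1..n} (unit_vec ({1..n} - q)) 0 = c"
proof -
  define b where "b S = (if S = {1..n} - q then smul c (unit_vec {}) else 0)" for S :: "nat set"
  have "b S \<in> omega_stalk n (q \<union> S)" if S: "S \<in> koszul_basis n q (card ({1..n} - q)) {1..n}" for S
  proof (cases "S = {1..n} - q")
    case True
    then have bS: "b S = smul c (unit_vec {})" and qS: "q \<union> S = {1..n}" using q_sub by (auto simp: b_def)
    have "smul c (unit_vec {}) \<in> kline" by (simp add: kline_def unit_vec_def)
    then show ?thesis unfolding bS qS omega_stalk_top .
  next
    case False
    then show ?thesis
      using submod_zero[OF is_sheafD(1)[OF omega_is_sheaf koszul_generator(1)[OF q_sub S]]] by (simp add: b_def)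
  qed
  then obtain \<psi> where \<psi>: "sheaf_hom (Uq n q) (koszul q (card ({1..n} - q))) (\<lambda>r s x. x) (omega_stalk n) (omega_res n) \<psi>"
    and \<psi>b: "\<forall>S\<in>koszul_basis n q (card ({1..n} - q)) {1..n}. \<psi> (q \<union> S) (unit_vec S) = b S"
    using koszul_sheaf_hom_from_generators[OF q_sub omega_is_sheaf] by blast
  have "{1..n} - q \<in> koszul_basis n q (card ({1..n} - q)) {1..n}" by (auto simp: koszul_basis_def)
  moreover have "q \<union> ({1..n} - q) = {1..n}" using q_sub by auto
  ultimately have "\<psi> {1..n} (unit_vec ({1..n} - q)) = smul c (unit_vec {})" using \<psi>b by (metis b_def)
  then show ?thesis using that \<psi> by (simp add: unit_vec_def)
qed

section \<open>Computing Ext\<close>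

lemma proj_resolution_augment:
  assumes pr: "proj_resolution Q F \<rho>F P \<rho> d \<epsilon>" and F: "is_sheaf Q F \<rho>F"
  shows "exact_complex Q (augment F P) (augment \<rho>F \<rho>) (augment \<epsilon> d)"
    and "projective_terms Q (augment F P) (augment \<rho>F \<rho>)"
proof -
  have ker: "{x \<in> augment F P (Suc j) r. augment \<epsilon> d j r x = 0} = augment \<epsilon> d (Suc j) r ` augment F P (Suc (Suc j)) r"
    if "r \<in> Q" for j r
    using pr that unfolding proj_resolution_def by (cases j) simp_all
  show "exact_complex Q (augment F P) (augment \<rho>F \<rho>) (augment \<epsilon> d)"
    unfolding exact_complex_def sheaf_complex_def
  proof (intro conjI allI ballI impI)
    fix j show "is_sheaf Q (augment F P j) (augment \<rho>F \<rho> j)"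
      using F pr unfolding proj_resolution_def by (cases j) simp_all
  next
    fix j show "sheaf_hom Q (augment F P (Suc j)) (augment \<rho>F \<rho> (Suc j)) (augment F P j) (augment \<rho>F \<rho> j) (augment \<epsilon> d j)"
      using pr unfolding proj_resolution_def by (cases j) simp_all
  next
    fix j r x assume "r \<in> Q" "x \<in> augment F P (Suc (Suc j)) r"
    then show "augment \<epsilon> d j r (augment \<epsilon> d (Suc j) r x) = 0" using ker[of r j] by blast
  next
    fix r assume "r \<in> Q"
    then show "augment \<epsilon> d 0 r ` augment F P 1 r = augment F P 0 r" using pr unfolding proj_resolution_def by simp
  next
    fix j r x assume "r \<in> Q" "x \<in> augment F P (Suc j) r" "augment \<epsilon> d j r x = 0"
    then show "x \<in> augment \<epsilon> d (Suc j) r ` augment F P (Suc (Suc j)) r" using ker[of r j] by blast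
  qed
  show "projective_terms Q (augment F P) (augment \<rho>F \<rho>)"
    using pr unfolding projective_terms_def proj_resolution_def by simp
qed

lemma cobd_eq_comp:
  assumes psi: "sheaf_hom Q (P i) (\<rho> i) G \<rho>G \<psi>" and Pi: "is_sheaf Q (P i) (\<rho> i)"
    and d: "sheaf_hom Q (P (Suc i)) (\<rho> (Suc i)) (P i) (\<rho> i) (d i)"
  shows "cobd Q P d i \<psi> = (\<lambda>r x. \<psi> r (d i r x))"
proof (rule ext, rule ext)
  fix r x
  show "cobd Q P d i \<psi> r x = \<psi> r (d i r x)"
  proof (cases "r \<in> Q \<and> x \<in> P (Suc i) r")
    case True then show ?thesis by (simp add: cobd_def)
  next
    case False
    show ?thesis
    proof (cases "r \<in> Q")
      case False then show ?thesis using sheaf_homD(3)[OF psi] by (simp add: cobd_def)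
    next
      case True
      then have "x \<notin> P (Suc i) r" using \<open>\<not> (r \<in> Q \<and> x \<in> P (Suc i) r)\<close> by blast
      then show ?thesis using sheaf_homD(4)[OF d] sheaf_hom_map_zero[OF psi Pi] by (auto simp: cobd_def)
    qed
  qed
qed

lemma coboundaries_subset_cocycles:
  assumes Z: "sheaf_complex Q (augment F P) (augment \<rho>F \<rho>) (augment \<epsilon> d)" and G: "is_sheaf Q G \<rho>G"
    and phi: "\<phi> \<in> coboundaries Q P \<rho> d G \<rho>G i"
  shows "\<phi> \<in> cocycles Q P \<rho> d G \<rho>G i"
proof (cases i)
  case 0
  then have \<phi>0: "\<phi> = (\<lambda>r x. 0)" using phi by (simp add: coboundaries_def fun_eq_iff)
  have "sheaf_hom Q (P i) (\<rho> i) G \<rho>G (\<lambda>r x. 0)" by (rule sheaf_hom_const_zero[OF G])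
  then show ?thesis unfolding \<phi>0 by (simp add: cocycles_def cobd_def fun_eq_iff)
next
  case (Suc i')
  then obtain \<psi> where psi: "sheaf_hom Q (P i') (\<rho> i') G \<rho>G \<psi>" and pe: "\<phi> = cobd Q P d i' \<psi>"
    using phi by (auto simp: coboundaries_def)
  have Pi': "is_sheaf Q (P i') (\<rho> i')" using sheaf_complexD(1)[OF Z, of "Suc i'"] by simp
  have di': "sheaf_hom Q (P (Suc i')) (\<rho> (Suc i')) (P i') (\<rho> i') (d i')"
    using sheaf_complexD(2)[OF Z, of "Suc i'"] by simp
  have pe2: "\<phi> = (\<lambda>r x. \<psi> r (d i' r x))" using pe cobd_eq_comp[where P = P and \<rho> = \<rho> and d = d and i = i', OF psi Pi' di'] by simp
  have ph: "sheaf_hom Q (P i) (\<rho> i) G \<rho>G \<phi>" unfolding pe2 Suc by (rule sheaf_hom_comp[OF di' psi Pi'])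
  have "cobd Q P d i \<phi> r x = 0" for r x
  proof (cases "r \<in> Q \<and> x \<in> P (Suc i) r")
    case True
    then have "d i' r (d i r x) = 0" using sheaf_complexD(3)[OF Z, of r x "Suc i'"] Suc by simp
    then show ?thesis using True pe2 sheaf_hom_map_zero[OF psi Pi'] by (simp add: cobd_def)
  qed (auto simp: cobd_def)
  then show ?thesis using ph by (simp add: cocycles_def fun_eq_iff)
qed

context
  fixes Q F \<rho>F P \<rho> \<epsilon> d W S \<alpha> \<beta> h i and \<phi> :: "'k::comm_ring_1 shom" and G \<rho>G
  assumes Z: "sheaf_complex Q (augment F P) (augment \<rho>F \<rho>) (augment \<epsilon> d)"
    and beta: "sheaf_hom Q (W (Suc i)) (S (Suc i)) (P i) (\<rho> i) (\<beta> (Suc i))"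
    and alpha: "sheaf_hom Q (P i) (\<rho> i) (W (Suc i)) (S (Suc i)) (\<alpha> (Suc i))"
    and h: "chain_homotopy Q (augment F P) (augment \<rho>F \<rho>) (augment \<epsilon> d) (augment F P) (augment \<rho>F \<rho>) (augment \<epsilon> d)
      (chain_id Q (augment F P)) (\<lambda>j r x. \<beta> j r (\<alpha> j r x)) h"
    and phi: "\<phi> \<in> cocycles Q P \<rho> d G \<rho>G i"
    and van: "\<forall>r\<in>Q. \<forall>y\<in>W (Suc i) r. \<phi> r (\<beta> (Suc i) r y) = 0"
begin

text \<open>A comparison map \<open>\<beta>\<close> from another complex, with \<open>\<beta> \<circ> \<alpha>\<close> homotopic to the identity of
  the resolution, detects coboundaries: a cocycle killed by \<open>\<beta>\<close> is the coboundary of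
  \<open>\<phi> \<circ> h\<close>.\<close>

lemma cocycle_eq_comp_homotopy:
  assumes r: "r \<in> Q" and x: "x \<in> P i r"
  shows "\<phi> r x = \<phi> r (h i r (augment \<epsilon> d i r x))"
proof -
  have ph: "sheaf_hom Q (P i) (\<rho> i) G \<rho>G \<phi>" and cz: "cobd Q P d i \<phi> = 0"
    using phi by (auto simp: cocycles_def)
  have Pi: "is_sheaf Q (P i) (\<rho> i)" using sheaf_complexD(1)[OF Z, of "Suc i"] by simp
  have di: "sheaf_hom Q (P (Suc i)) (\<rho> (Suc i)) (P i) (\<rho> i) (d i)" using sheaf_complexD(2)[OF Z, of "Suc i"] by simp
  have hi: "sheaf_hom Q (augment F P i) (augment \<rho>F \<rho> i) (P i) (\<rho> i) (h i)"
    using chain_homotopyD(1)[OF h, of i] by simp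
  have hSi: "sheaf_hom Q (P i) (\<rho> i) (P (Suc i)) (\<rho> (Suc i)) (h (Suc i))"
    using chain_homotopyD(1)[OF h, of "Suc i"] by simp
  note l = sheaf_homD(1)[OF ph r] and sm = is_sheafD(1)[OF Pi r]
  have m1: "\<beta> (Suc i) r (\<alpha> (Suc i) r x) \<in> P i r" using sheaf_hom_in[OF beta r sheaf_hom_in[OF alpha r x]] .
  have m2: "h (Suc i) r x \<in> P (Suc i) r" using sheaf_hom_in[OF hSi r x] .
  have m3: "d i r (h (Suc i) r x) \<in> P i r" using sheaf_hom_in[OF di r m2] .
  have m4: "augment \<epsilon> d i r x \<in> augment F P i r"
    using sheaf_hom_in[OF sheaf_complexD(2)[OF Z, of i] r] x by simp
  have m5: "h i r (augment \<epsilon> d i r x) \<in> P i r" using sheaf_hom_in[OF hi r m4] .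
  have "x - \<beta> (Suc i) r (\<alpha> (Suc i) r x) = d i r (h (Suc i) r x) + h i r (augment \<epsilon> d i r x)"
    using chain_homotopyD(3)[OF h r, of x i] r x by (simp add: chain_id_def)
  then have "\<phi> r x - \<phi> r (\<beta> (Suc i) r (\<alpha> (Suc i) r x))
      = \<phi> r (d i r (h (Suc i) r x)) + \<phi> r (h i r (augment \<epsilon> d i r x))"
    using linmap_diff[OF sm l x m1] linmap_add[OF l m3 m5] by simp
  moreover have "\<phi> r (\<beta> (Suc i) r (\<alpha> (Suc i) r x)) = 0" using van r sheaf_hom_in[OF alpha r x] by blast
  moreover have "\<phi> r (d i r (h (Suc i) r x)) = 0"
    using fun_cong[OF fun_cong[OF cz, of r], of "h (Suc i) r x"] r m2 by (simp add: cobd_def)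
  ultimately show ?thesis by simp
qed

lemma cocycle_in_coboundaries: "\<phi> \<in> coboundaries Q P \<rho> d G \<rho>G i"
proof -
  have ph: "sheaf_hom Q (P i) (\<rho> i) G \<rho>G \<phi>" using phi by (simp add: cocycles_def)
  have Pi: "is_sheaf Q (P i) (\<rho> i)" using sheaf_complexD(1)[OF Z, of "Suc i"] by simp
  show ?thesis
  proof (cases i)
    case 0
    have "\<phi> r x = 0" for r x
    proof (cases "r \<in> Q \<and> x \<in> P i r")
      case True
      then show ?thesis
        using cocycle_eq_comp_homotopy chain_homotopyD(2)[OF h] 0 sheaf_hom_map_zero[OF ph Pi] by simp
    qed (use sheaf_homD(3,4)[OF ph] in auto)
    then show ?thesis using 0 by (simp add: coboundaries_def fun_eq_iff)
  next
    case (Suc i')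
    have hi: "sheaf_hom Q (P i') (\<rho> i') (P i) (\<rho> i) (h i)"
      using chain_homotopyD(1)[OF h, of i] Suc by simp
    have psi: "sheaf_hom Q (P i') (\<rho> i') G \<rho>G (\<lambda>r y. \<phi> r (h i r y))"
      by (rule sheaf_hom_comp[OF hi ph Pi])
    have "\<phi> = cobd Q P d i' (\<lambda>r y. \<phi> r (h i r y))"
    proof (rule ext, rule ext)
      fix r x show "\<phi> r x = cobd Q P d i' (\<lambda>r y. \<phi> r (h i r y)) r x"
      proof (cases "r \<in> Q \<and> x \<in> P i r")
        case True
        then show ?thesis using cocycle_eq_comp_homotopy[of r x] Suc by (simp add: cobd_def)
      qed (use sheaf_homD(3,4)[OF ph] Suc in \<open>auto simp: cobd_def\<close>)
    qed
    then show ?thesis using psi Suc by (auto simp: coboundaries_def)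
  qed
qed

end

locale koszul_comparison =
  fixes n :: nat and K :: "nat set set" and q :: "nat set"
    and P :: "nat \<Rightarrow> nat set \<Rightarrow> 'k::comm_ring_1 vec set"
    and \<rho> :: "nat \<Rightarrow> nat set \<Rightarrow> nat set \<Rightarrow> 'k vec \<Rightarrow> 'k vec"
    and d :: "nat \<Rightarrow> 'k shom" and \<epsilon> :: "'k shom"
    and \<alpha> \<beta> hP hK :: "nat \<Rightarrow> 'k shom"
  assumes q_sub: "q \<subseteq> {1..n}"
    and K_near_q: "\<forall>r\<in>Uq n q. r \<in> K \<longleftrightarrow> r = q"
    and resolution: "sheaf_complex (Uq n q) (augment (kK_stalk K) P) (augment (kK_res K) \<rho>) (augment \<epsilon> d)"
    and alpha: "chain_map (Uq n q) (augment (kK_stalk K) P) (augment (kK_res K) \<rho>) (augment \<epsilon> d)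
      (aug_koszul K q) (aug_koszul_res K) (aug_koszul_diff n q) \<alpha>"
    and beta: "chain_map (Uq n q) (aug_koszul K q) (aug_koszul_res K) (aug_koszul_diff n q)
      (augment (kK_stalk K) P) (augment (kK_res K) \<rho>) (augment \<epsilon> d) \<beta>"
    and homotopy_P: "chain_homotopy (Uq n q) (augment (kK_stalk K) P) (augment (kK_res K) \<rho>) (augment \<epsilon> d)
      (augment (kK_stalk K) P) (augment (kK_res K) \<rho>) (augment \<epsilon> d)
      (chain_id (Uq n q) (augment (kK_stalk K) P)) (\<lambda>j r x. \<beta> j r (\<alpha> j r x)) hP"
    and homotopy_K: "chain_homotopy (Uq n q) (aug_koszul K q) (aug_koszul_res K) (aug_koszul_diff n q)
      (aug_koszul K q) (aug_koszul_res K) (aug_koszul_diff n q)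
      (chain_id (Uq n q) (aug_koszul K q)) (\<lambda>j r x. \<alpha> j r (\<beta> j r x)) hK"
begin

abbreviation top_degree :: nat where "top_degree \<equiv> card ({1..n} - q)"

abbreviation top_vec :: "'k vec" where "top_vec \<equiv> unit_vec ({1..n} - q)"

lemma P_sheaf: "is_sheaf (Uq n q) (P i) (\<rho> i)"
  using sheaf_complexD(1)[OF resolution, of "Suc i"] by simp

lemma alpha_Suc: "sheaf_hom (Uq n q) (P i) (\<rho> i) (koszul q i) (\<lambda>r s x. x) (\<alpha> (Suc i))"
  using chain_mapD(1)[OF alpha, of "Suc i"] by simp

lemma beta_Suc: "sheaf_hom (Uq n q) (koszul q i) (\<lambda>r s x. x) (P i) (\<rho> i) (\<beta> (Suc i))"
  using chain_mapD(1)[OF beta, of "Suc i"] by simp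

lemma top_in_Uq: "{1..n} \<in> Uq n q"
  using q_sub by (simp add: mem_Uq_iff)

lemma cocycle_comp_beta:
  "\<phi> \<in> cocycles (Uq n q) P \<rho> d G \<rho>G i \<Longrightarrow>
    sheaf_hom (Uq n q) (koszul q i) (\<lambda>r s x. x) G \<rho>G (\<lambda>r y. \<phi> r (\<beta> (Suc i) r y))"
  by (rule sheaf_hom_comp[OF beta_Suc _ P_sheaf]) (simp add: cocycles_def)

lemma cocycle_in_coboundaries_if_comp_beta_vanishes:
  assumes "\<phi> \<in> cocycles (Uq n q) P \<rho> d G \<rho>G i"
    and "\<forall>r\<in>Uq n q. \<forall>y\<in>koszul q i r. \<phi> r (\<beta> (Suc i) r y) = 0"
  shows "\<phi> \<in> coboundaries (Uq n q) P \<rho> d G \<rho>G i"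
  by (rule cocycle_in_coboundaries[where W = "aug_koszul K q" and S = "aug_koszul_res K" and \<alpha> = \<alpha> and \<beta> = \<beta>,
        OF resolution _ _ homotopy_P assms(1)])
     (use beta_Suc alpha_Suc assms(2) in simp_all)

lemma Ext_zero_off_top:
  assumes "i \<noteq> top_degree"
  shows "Ext_zero (Uq n q) P \<rho> d (omega_stalk n) (omega_res n) i"
  unfolding Ext_zero_def
proof (intro equalityI subsetI)
  fix \<phi> assume \<phi>: "\<phi> \<in> cocycles (Uq n q) P \<rho> d (omega_stalk n) (omega_res n) i"
  show "\<phi> \<in> coboundaries (Uq n q) P \<rho> d (omega_stalk n) (omega_res n) i"
    by (rule cocycle_in_coboundaries_if_comp_beta_vanishes[OF \<phi>])
       (use hom_koszul_omega_vanishes[OF q_sub cocycle_comp_beta[OF \<phi>]] assms in auto)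
qed (rule coboundaries_subset_cocycles[OF resolution omega_is_sheaf])

text \<open>The isomorphism of the top Ext group with \<open>k\<close>: evaluate a cocycle on \<open>\<beta>\<close> of the top
  generator.\<close>

definition top_eval :: "'k shom \<Rightarrow> 'k" where
  "top_eval \<phi> = \<phi> {1..n} (\<beta> (Suc top_degree) {1..n} top_vec) 0"

context
  fixes \<psi> :: "'k shom"
  assumes \<psi>: "sheaf_hom (Uq n q) (koszul q top_degree) (\<lambda>r s x. x) (omega_stalk n) (omega_res n) \<psi>"
begin

lemma comp_alpha_cocycle:
  "(\<lambda>r x. \<psi> r (\<alpha> (Suc top_degree) r x)) \<in> cocycles (Uq n q) P \<rho> d (omega_stalk n) (omega_res n) top_degree"
proof -
  have "sheaf_hom (Uq n q) (koszul q (Suc top_degree)) (\<lambda>r s x. x) (omega_stalk n) (omega_res n)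
      (\<lambda>r y. \<psi> r (koszul_hom n q top_degree r y))"
    by (rule sheaf_hom_comp[OF koszul_hom_sheaf_hom \<psi> koszul_is_sheaf])
  from hom_koszul_omega_vanishes[OF q_sub this]
  have \<psi>d: "\<psi> r (koszul_hom n q top_degree r y) = 0" for r y by simp
  have "cobd (Uq n q) P d top_degree (\<lambda>r x. \<psi> r (\<alpha> (Suc top_degree) r x)) r x = 0" for r x
  proof (cases "r \<in> Uq n q \<and> x \<in> P (Suc top_degree) r")
    case True
    then have "\<alpha> (Suc top_degree) r (d top_degree r x) = koszul_hom n q top_degree r (\<alpha> (Suc (Suc top_degree)) r x)"
      using chain_mapD(2)[OF alpha, of r x "Suc top_degree"] by simp
    then show ?thesis using True \<psi>d by (simp add: cobd_def)
  qed (auto simp: cobd_def)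
  moreover have "sheaf_hom (Uq n q) (P top_degree) (\<rho> top_degree) (omega_stalk n) (omega_res n)
      (\<lambda>r x. \<psi> r (\<alpha> (Suc top_degree) r x))"
    by (rule sheaf_hom_comp[OF alpha_Suc \<psi> koszul_is_sheaf])
  ultimately show ?thesis by (simp add: cocycles_def fun_eq_iff)
qed

text \<open>Evaluate the homotopy \<open>id \<simeq> \<alpha> \<circ> \<beta>\<close> of the Koszul complex at the top generator: \<open>\<psi>\<close>
  kills both correction terms, since they come from Koszul terms of other degrees.\<close>

lemma top_eval_comp_alpha: "top_eval (\<lambda>r x. \<psi> r (\<alpha> (Suc top_degree) r x)) = \<psi> {1..n} top_vec 0"
proof -
  let ?m = top_degree and ?t = "{1..n}" and ?e = top_vec
  have e: "?e \<in> koszul q ?m ?t" by (rule top_unit_vec_in_koszul)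
  note t = top_in_Uq
  have l: "linmap (koszul q ?m ?t) (omega_stalk n ?t) (\<psi> ?t)" using sheaf_homD(1)[OF \<psi> t] .
  have hS: "hK (Suc ?m) ?t ?e \<in> koszul q (Suc ?m) ?t"
    using sheaf_hom_in[OF chain_homotopyD(1)[OF homotopy_K, of "Suc ?m"] t] e by simp
  have De: "aug_koszul_diff n q ?m ?t ?e \<in> aug_koszul K q ?m ?t"
    using sheaf_hom_in[OF sheaf_complexD(2)[OF exact_complexD(1)[OF aug_koszul_exact]] t] e
      q_sub K_near_q by (simp add: mem_Uq_iff)
  have m1: "\<alpha> (Suc ?m) ?t (\<beta> (Suc ?m) ?t ?e) \<in> koszul q ?m ?t"
    using sheaf_hom_in[OF alpha_Suc t sheaf_hom_in[OF beta_Suc t e]] .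
  have m2: "koszul_hom n q ?m ?t (hK (Suc ?m) ?t ?e) \<in> koszul q ?m ?t"
    using sheaf_hom_in[OF koszul_hom_sheaf_hom t hS] .
  have m3: "hK ?m ?t (aug_koszul_diff n q ?m ?t ?e) \<in> koszul q ?m ?t"
    using sheaf_hom_in[OF chain_homotopyD(1)[OF homotopy_K, of ?m] t De] by simp
  have "?e - \<alpha> (Suc ?m) ?t (\<beta> (Suc ?m) ?t ?e)
      = koszul_hom n q ?m ?t (hK (Suc ?m) ?t ?e) + hK ?m ?t (aug_koszul_diff n q ?m ?t ?e)"
    using chain_homotopyD(3)[OF homotopy_K t, of ?e ?m] e t by (simp add: chain_id_def)
  then have "\<psi> ?t ?e - \<psi> ?t (\<alpha> (Suc ?m) ?t (\<beta> (Suc ?m) ?t ?e))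
      = \<psi> ?t (koszul_hom n q ?m ?t (hK (Suc ?m) ?t ?e)) + \<psi> ?t (hK ?m ?t (aug_koszul_diff n q ?m ?t ?e))"
    using linmap_diff[OF koszul_submod l e m1] linmap_add[OF l m2 m3] by simp
  moreover have "\<psi> ?t (koszul_hom n q ?m ?t (hK (Suc ?m) ?t ?e)) = 0"
    using hom_koszul_omega_vanishes[OF q_sub sheaf_hom_comp[OF koszul_hom_sheaf_hom \<psi> koszul_is_sheaf]] by simp
  moreover have "\<psi> ?t (hK ?m ?t (aug_koszul_diff n q ?m ?t ?e)) = 0"
  proof (cases ?m)
    case 0
    then show ?thesis
      by (simp only: 0 chain_homotopyD(2)[OF homotopy_K] sheaf_hom_map_zero[OF \<psi> koszul_is_sheaf])
  next
    case (Suc m')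
    have "sheaf_hom (Uq n q) (koszul q m') (\<lambda>r s x. x) (koszul q ?m) (\<lambda>r s x. x) (hK ?m)"
      using chain_homotopyD(1)[OF homotopy_K, of ?m] Suc by simp
    from sheaf_hom_comp[OF this \<psi> koszul_is_sheaf]
    show ?thesis using hom_koszul_omega_vanishes[OF q_sub] Suc by fastforce
  qed
  ultimately have "\<psi> ?t (\<alpha> (Suc ?m) ?t (\<beta> (Suc ?m) ?t ?e)) = \<psi> ?t ?e" by simp
  then show ?thesis by (simp add: top_eval_def)
qed

end

lemma top_eval_eq_0_imp_coboundary:
  assumes \<phi>: "\<phi> \<in> cocycles (Uq n q) P \<rho> d (omega_stalk n) (omega_res n) top_degree" and "top_eval \<phi> = 0"
  shows "\<phi> \<in> coboundaries (Uq n q) P \<rho> d (omega_stalk n) (omega_res n) top_degree"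
proof (rule cocycle_in_coboundaries_if_comp_beta_vanishes[OF \<phi>])
  let ?\<psi> = "\<lambda>r y. \<phi> r (\<beta> (Suc top_degree) r y)"
  have \<psi>: "sheaf_hom (Uq n q) (koszul q top_degree) (\<lambda>r s x. x) (omega_stalk n) (omega_res n) ?\<psi>"
    by (rule cocycle_comp_beta[OF \<phi>])
  have "?\<psi> {1..n} top_vec \<in> kline"
    unfolding omega_stalk_top[of n, symmetric] by (rule sheaf_hom_in[OF \<psi> top_in_Uq top_unit_vec_in_koszul])
  moreover have "?\<psi> {1..n} top_vec 0 = 0" using assms(2) by (simp add: top_eval_def)
  ultimately have "?\<psi> {1..n} top_vec = 0" by (rule kline_eq_zero)
  then show "\<forall>r\<in>Uq n q. \<forall>y\<in>koszul q top_degree r. ?\<psi> r y = 0"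
    using hom_koszul_omega_vanishes[OF q_sub \<psi>] by blast
qed

lemma top_eval_coboundary:
  assumes "\<phi> \<in> coboundaries (Uq n q) P \<rho> d (omega_stalk n) (omega_res n) top_degree"
  shows "top_eval \<phi> = 0"
proof (cases top_degree)
  case 0
  then show ?thesis using assms by (simp add: coboundaries_def top_eval_def)
next
  case (Suc m')
  then obtain \<psi> where \<psi>: "sheaf_hom (Uq n q) (P m') (\<rho> m') (omega_stalk n) (omega_res n) \<psi>"
    and \<phi>: "\<phi> = cobd (Uq n q) P d m' \<psi>" using assms by (auto simp: coboundaries_def)
  have be: "\<beta> (Suc top_degree) {1..n} top_vec \<in> P (Suc m') {1..n}"
    using sheaf_hom_in[OF beta_Suc top_in_Uq top_unit_vec_in_koszul] Suc by simp
  have "d m' {1..n} (\<beta> (Suc top_degree) {1..n} top_vec) = \<beta> (Suc m') {1..n} (koszul_hom n q m' {1..n} top_vec)"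
    using chain_mapD(2)[OF beta top_in_Uq, of top_vec top_degree] top_unit_vec_in_koszul[of n q] Suc by simp
  moreover have "\<psi> {1..n} (\<beta> (Suc m') {1..n} y) = 0" for y
    using hom_koszul_omega_vanishes[OF q_sub sheaf_hom_comp[OF beta_Suc \<psi> P_sheaf]] Suc by simp
  ultimately show ?thesis using \<phi> top_in_Uq be by (simp add: top_eval_def cobd_def)
qed

lemma Ext_iso_k_top: "Ext_iso_k (Uq n q) P \<rho> d (omega_stalk n) (omega_res n) top_degree"
  unfolding Ext_iso_k_def
proof (intro exI[of _ top_eval] conjI ballI allI)
  have "c \<in> top_eval ` cocycles (Uq n q) P \<rho> d (omega_stalk n) (omega_res n) top_degree" for c
  proof -
    obtain \<psi> where \<psi>: "sheaf_hom (Uq n q) (koszul q top_degree) (\<lambda>r s x. x) (omega_stalk n) (omega_res n) \<psi>"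
      and \<psi>c: "\<psi> {1..n} top_vec 0 = c"
      by (rule top_hom_exists[OF q_sub])
    have "c = top_eval (\<lambda>r x. \<psi> r (\<alpha> (Suc top_degree) r x))"
      using top_eval_comp_alpha[OF \<psi>] \<psi>c by simp
    then show ?thesis by (rule image_eqI[where f = top_eval]) (rule comp_alpha_cocycle[OF \<psi>])
  qed
  then show "top_eval ` cocycles (Uq n q) P \<rho> d (omega_stalk n) (omega_res n) top_degree = UNIV"
    by (intro UNIV_eq_I[symmetric])
  show "{\<phi> \<in> cocycles (Uq n q) P \<rho> d (omega_stalk n) (omega_res n) top_degree. top_eval \<phi> = 0}
      = coboundaries (Uq n q) P \<rho> d (omega_stalk n) (omega_res n) top_degree"
    using top_eval_eq_0_imp_coboundary top_eval_coboundary
      coboundaries_subset_cocycles[OF resolution omega_is_sheaf] by blast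
qed (simp_all add: top_eval_def hsmul_def)

end

lemma koszul_comparison_exists:
  fixes P :: "nat \<Rightarrow> nat set \<Rightarrow> 'k::comm_ring_1 vec set"
  assumes q_sub: "q \<subseteq> {1..n}" and K_near_q: "\<forall>r\<in>Uq n q. r \<in> K \<longleftrightarrow> r = q"
    and res: "proj_resolution (Uq n q) (kK_stalk K) (kK_res K) P \<rho> d \<epsilon>"
  shows "\<exists>\<alpha> \<beta> hP hK. koszul_comparison n K q P \<rho> d \<epsilon> \<alpha> \<beta> hP hK"
proof -
  let ?Q = "Uq n q" and ?Z = "augment (kK_stalk K) P" and ?R = "augment (kK_res K) \<rho>" and ?D = "augment \<epsilon> d"
  have qQ: "q \<in> ?Q" using q_sub by (simp add: mem_Uq_iff)
  have kK: "is_sheaf ?Q (kK_stalk K :: nat set \<Rightarrow> 'k vec set) (kK_res K)"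
    by (rule kK_is_sheaf) (use K_near_q in blast)
  note P_exact = proj_resolution_augment(1)[OF res kK] and P_proj = proj_resolution_augment(2)[OF res kK]
  note P_cx = exact_complexD(1)[OF P_exact]
  have K_exact: "exact_complex ?Q (aug_koszul K q) (aug_koszul_res K) (aug_koszul_diff n q :: nat \<Rightarrow> 'k shom)"
    by (rule aug_koszul_exact[OF qQ K_near_q])
  note K_cx = exact_complexD(1)[OF K_exact]
  have K_proj: "projective_terms ?Q (aug_koszul K q :: nat \<Rightarrow> nat set \<Rightarrow> 'k vec set) (aug_koszul_res K)"
    by (simp add: projective_terms_def koszul_projective[OF q_sub])
  have id0: "sheaf_hom ?Q (kK_stalk K) (kK_res K) (kK_stalk K) (kK_res K) (chain_id ?Q ?Z 0)"
    using sheaf_hom_id[OF kK] by (simp add: chain_id_def[abs_def])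
  obtain \<alpha> where \<alpha>: "chain_map ?Q ?Z ?R ?D (aug_koszul K q) (aug_koszul_res K) (aug_koszul_diff n q) \<alpha>"
    and \<alpha>0: "\<alpha> 0 = chain_id ?Q ?Z 0"
    using chain_map_lift[OF P_cx P_proj K_exact] id0 by fastforce
  obtain \<beta> where \<beta>: "chain_map ?Q (aug_koszul K q) (aug_koszul_res K) (aug_koszul_diff n q) ?Z ?R ?D \<beta>"
    and \<beta>0: "\<beta> 0 = chain_id ?Q ?Z 0"
    using chain_map_lift[OF K_cx K_proj P_exact] id0 by fastforce
  obtain hP where "chain_homotopy ?Q ?Z ?R ?D ?Z ?R ?D (chain_id ?Q ?Z) (\<lambda>j r x. \<beta> j r (\<alpha> j r x)) hP"
    using chain_homotopy_exists[OF P_cx P_proj P_exact chain_map_id[OF P_cx] chain_map_comp[OF \<alpha> \<beta> K_cx]]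
      \<alpha>0 \<beta>0 by (fastforce simp: chain_id_def)
  moreover obtain hK where "chain_homotopy ?Q (aug_koszul K q) (aug_koszul_res K) (aug_koszul_diff n q)
      (aug_koszul K q) (aug_koszul_res K) (aug_koszul_diff n q)
      (chain_id ?Q (aug_koszul K q)) (\<lambda>j r x. \<alpha> j r (\<beta> j r x)) hK"
    using chain_homotopy_exists[OF K_cx K_proj K_exact chain_map_id[OF K_cx] chain_map_comp[OF \<beta> \<alpha> P_cx]]
      \<alpha>0 \<beta>0 by (fastforce simp: chain_id_def)
  ultimately show ?thesis
    using q_sub K_near_q P_cx \<alpha> \<beta> unfolding koszul_comparison_def by blast
qed

theorem corollary4p13:
  fixes n :: nat and K :: "nat set set" and q :: "nat set"
    and P :: "nat \<Rightarrow> nat set \<Rightarrow> 'k::comm_ring_1 vec set"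
    and \<rho> :: "nat \<Rightarrow> nat set \<Rightarrow> nat set \<Rightarrow> 'k vec \<Rightarrow> 'k vec"
    and d :: "nat \<Rightarrow> nat set \<Rightarrow> 'k vec \<Rightarrow> 'k vec"
    and \<epsilon> :: "nat set \<Rightarrow> 'k vec \<Rightarrow> 'k vec"
  assumes "noetherian_ring TYPE('k)"
    and "closed_AF1 n K"
    and "q \<in> K" and "\<forall>r\<in>K. q \<subseteq> r \<longrightarrow> r = q"
    and "proj_resolution (Uq n q) (kK_stalk K) (kK_res K) P \<rho> d \<epsilon>"
  shows "Ext_iso_k (Uq n q) P \<rho> d (omega_stalk n) (omega_res n) (dq n q)
     \<and> (\<forall>i. i \<noteq> dq n q \<longrightarrow> Ext_zero (Uq n q) P \<rho> d (omega_stalk n) (omega_res n) i)"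
proof -
  \<comment> \<open>The Koszul resolution is free over any commutative ring, so \<open>k\<close> need not be noetherian.\<close>
  have q_sub: "q \<subseteq> {1..n}"
    using assms(2,3) by (auto simp: closed_AF1_def AF1_def)
  have K_near_q: "\<forall>r\<in>Uq n q. r \<in> K \<longleftrightarrow> r = q"
    using assms(3,4) by (auto simp: mem_Uq_iff)
  obtain \<alpha> \<beta> hP hK where c: "koszul_comparison n K q P \<rho> d \<epsilon> \<alpha> \<beta> hP hK"
    using koszul_comparison_exists[OF q_sub K_near_q assms(5)] by blast
  have "dq n q = card ({1..n} - q)"
    using q_sub by (simp add: dq_def card_Diff_subset finite_subset)
  then show ?thesis
    using koszul_comparison.Ext_iso_k_top[OF c] koszul_comparison.Ext_zero_off_top[OF c] by simp
qed

end
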